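(* Let $\Gamma$ be a group, let $\mathcal{C},\mathcal{C}'$ be monoidal categories, and let $G:\mathcal{C}\to\mathcal{C}'$ and $H:\mathcal{C}'\to\mathcal{C}$ be monoidal equivalences together with isomorphisms of monoidal functors $\alpha: G\circ H\cong \mathrm{id}_{\mathcal{C}'}$ and $\beta: H\circ G\cong \mathrm{id}_{\mathcal{C}}$. Let $(\theta,F)$ be a factor set on $\Gamma$ with coefficients in $\mathcal{C}$, and let $\mathcal{D}=\Delta(\theta,F)$ be the associated crossed product $\Gamma$-extension of $\mathcal{C}$. Then the quadruple $(G,H,\alpha,\beta)$ induces (i) a factor set $(\theta',F')$ on $\Gamma$ with coefficients in $\mathcal{C}'$, and (ii) a $\Gamma$-equivalence $\Delta(\theta,F)\to \Delta(\theta',F')$.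
   Context: A monoidal functor is written $F=(F,\widetilde F,\widehat F)$ with natural isomorphisms $\widetilde F_{X,Y}:F(X\otimes Y)\to F(X)\otimes F(Y)$ and $\widehat F:F(I)\to I$ satisfying the usual coherence conditions. A factor set on a group $\Gamma$ with coefficients in a monoidal category $\mathcal{C}$ is a pair $(\theta,F)$ consisting of a family of monoidal autoequivalences $F^\sigma=(F^\sigma,\widetilde{F^\sigma},\widehat{F^\sigma}):\mathcal{C}\to\mathcal{C}$ ($\sigma\in\Gamma$) and a family of isomorphisms of monoidal functors $\theta^{\sigma,\tau}:F^\sigma F^\tau\to F^{\sigma\tau}$ ($\sigma,\tau\in\Gamma$) such that: (i) $F^1=\mathrm{id}_{\mathcal{C}}$; (ii) $\theta^{1,\sigma}=\mathrm{id}_{F^\sigma}=\theta^{\sigma,1}$ for all $\sigma$; (iii) $\theta^{\sigma\tau,\gamma}\circ(\theta^{\sigma,\tau}F^\gamma)=\theta^{\sigma,\tau\gamma}\circ(F^\sigma\theta^{\tau,\gamma})$ as transformations $F^\sigma F^\tau F^\gamma\to F^{\sigma\tau\gamma}$, for all $\sigma,\tau,\gamma\in\Gamma$. The crossed product $\Delta(\theta,F)$ is the category whose objects are those of $\mathcal{C}$, whose morphisms $A\to B$ are pairs $(u,\sigma)$ with $\sigma\in\Gamma$ and $u:F^\sigma(A)\to B$ a morphism of $\mathcal{C}$, with composition of $A\xrightarrow{(u,\sigma)}B\xrightarrow{(v,\tau)}C$ given by $(v\circ F^\tau(u)\circ(\theta^{\tau,\sigma}_A)^{-1},\tau\sigma)$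 (identities $(\mathrm{id}_A,1)$); it carries the stable $\Gamma$-grading $g(u,\sigma)=\sigma$ and the isomorphism $j:\mathcal{C}\to\mathrm{Ker}\,\Delta(\theta,F)$, $j(u)=(u,1)$, onto the subcategory of morphisms of grade $1$. A $\Gamma$-equivalence between $\Gamma$-graded categories is a functor compatible with the gradings (preserving the grade of every morphism) which is an equivalence of categories. *)

theory Defs
  imports "HOL-Algebra.Group"
begin

record ('o,'m) cat =
  Ob  :: "'o set"
  Arr :: "'m set"
  Dom :: "'m \<Rightarrow> 'o"
  Cod :: "'m \<Rightarrow> 'o"
  Idt :: "'o \<Rightarrow> 'm"
  Cmp :: "'m \<Rightarrow> 'm \<Rightarrow> 'm"   (* Cmp C g f = g \<circ> f *)

definition hom where
  "hom C A B = {f \<in> Arr C. Dom C f = A \<and> Cod C f = B}"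

definition category where
  "category C \<longleftrightarrow>
    (\<forall>f\<in>Arr C. Dom C f \<in> Ob C \<and> Cod C f \<in> Ob C) \<and>
    (\<forall>A\<in>Ob C. Idt C A \<in> hom C A A) \<and>
    (\<forall>f\<in>Arr C. \<forall>g\<in>Arr C. Cod C f = Dom C g \<longrightarrow>
        Cmp C g f \<in> hom C (Dom C f) (Cod C g)) \<and>
    (\<forall>f\<in>Arr C. \<forall>g\<in>Arr C. \<forall>h\<in>Arr C. Cod C f = Dom C g \<and> Cod C g = Dom C h \<longrightarrow>
        Cmp C h (Cmp C g f) = Cmp C (Cmp C h g) f) \<and>
    (\<forall>f\<in>Arr C. Cmp C (Idt C (Cod C f)) f = f \<and> Cmp C f (Idt C (Dom C f)) = f)"

definition is_iso where
  "is_iso C f \<longleftrightarrow> f \<in> Arr C \<and>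
     (\<exists>g \<in> hom C (Cod C f) (Dom C f). Cmp C g f = Idt C (Dom C f) \<and> Cmp C f g = Idt C (Cod C f))"

definition inv_arr where
  "inv_arr C f = (SOME g. g \<in> hom C (Cod C f) (Dom C f) \<and>
       Cmp C g f = Idt C (Dom C f) \<and> Cmp C f g = Idt C (Cod C f))"

record ('o,'m) moncat = "('o,'m) cat" +
  Tns  :: "'o \<Rightarrow> 'o \<Rightarrow> 'o"
  TnsA :: "'m \<Rightarrow> 'm \<Rightarrow> 'm"
  Unt  :: 'o
  Asc  :: "'o \<Rightarrow> 'o \<Rightarrow> 'o \<Rightarrow> 'm"
  LU   :: "'o \<Rightarrow> 'm"
  RU   :: "'o \<Rightarrow> 'm"

definition monoidal_category where
  "monoidal_category C \<longleftrightarrow> category C \<and> Unt C \<in> Ob C \<and>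
    (\<forall>A\<in>Ob C. \<forall>B\<in>Ob C. Tns C A B \<in> Ob C) \<and>
    (\<forall>f\<in>Arr C. \<forall>g\<in>Arr C. TnsA C f g \<in>
        hom C (Tns C (Dom C f) (Dom C g)) (Tns C (Cod C f) (Cod C g))) \<and>
    (\<forall>A\<in>Ob C. \<forall>B\<in>Ob C. TnsA C (Idt C A) (Idt C B) = Idt C (Tns C A B)) \<and>
    (\<forall>f\<in>Arr C. \<forall>g\<in>Arr C. \<forall>f'\<in>Arr C. \<forall>g'\<in>Arr C.
        Cod C f = Dom C g \<and> Cod C f' = Dom C g' \<longrightarrow>
        TnsA C (Cmp C g f) (Cmp C g' f') = Cmp C (TnsA C g g') (TnsA C f f')) \<and>
    (\<forall>A\<in>Ob C. \<forall>B\<in>Ob C. \<forall>E\<in>Ob C.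
        Asc C A B E \<in> hom C (Tns C (Tns C A B) E) (Tns C A (Tns C B E)) \<and> is_iso C (Asc C A B E)) \<and>
    (\<forall>A\<in>Ob C. LU C A \<in> hom C (Tns C (Unt C) A) A \<and> is_iso C (LU C A)) \<and>
    (\<forall>A\<in>Ob C. RU C A \<in> hom C (Tns C A (Unt C)) A \<and> is_iso C (RU C A)) \<and>
    (\<forall>f\<in>Arr C. \<forall>g\<in>Arr C. \<forall>h\<in>Arr C.
        Cmp C (Asc C (Cod C f) (Cod C g) (Cod C h)) (TnsA C (TnsA C f g) h) =
        Cmp C (TnsA C f (TnsA C g h)) (Asc C (Dom C f) (Dom C g) (Dom C h))) \<and>
    (\<forall>f\<in>Arr C. Cmp C (LU C (Cod C f)) (TnsA C (Idt C (Unt C)) f) = Cmp C f (LU C (Dom C f))) \<and>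
    (\<forall>f\<in>Arr C. Cmp C (RU C (Cod C f)) (TnsA C f (Idt C (Unt C))) = Cmp C f (RU C (Dom C f))) \<and>
    (\<forall>A\<in>Ob C. \<forall>B\<in>Ob C. \<forall>D\<in>Ob C. \<forall>E\<in>Ob C.
        Cmp C (TnsA C (Idt C A) (Asc C B D E))
          (Cmp C (Asc C A (Tns C B D) E) (TnsA C (Asc C A B D) (Idt C E))) =
        Cmp C (Asc C A B (Tns C D E)) (Asc C (Tns C A B) D E)) \<and>
    (\<forall>A\<in>Ob C. \<forall>B\<in>Ob C.
        Cmp C (TnsA C (Idt C A) (LU C B)) (Asc C A (Unt C) B) = TnsA C (RU C A) (Idt C B))"

record ('o1,'m1,'o2,'m2) fnctr =
  FO :: "'o1 \<Rightarrow> 'o2"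
  FM :: "'m1 \<Rightarrow> 'm2"

definition is_functor where
  "is_functor C D F \<longleftrightarrow> category C \<and> category D \<and>
    (\<forall>A\<in>Ob C. FO F A \<in> Ob D) \<and>
    (\<forall>f\<in>Arr C. FM F f \<in> hom D (FO F (Dom C f)) (FO F (Cod C f))) \<and>
    (\<forall>A\<in>Ob C. FM F (Idt C A) = Idt D (FO F A)) \<and>
    (\<forall>f\<in>Arr C. \<forall>g\<in>Arr C. Cod C f = Dom C g \<longrightarrow> FM F (Cmp C g f) = Cmp D (FM F g) (FM F f))"

definition fcomp where
  "fcomp F G = \<lparr>FO = FO F \<circ> FO G, FM = FM F \<circ> FM G\<rparr>"

definition fid :: "('o,'m,'o,'m) fnctr" where
  "fid = \<lparr>FO = id, FM = id\<rparr>"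

definition is_nat_trans where
  "is_nat_trans C D F G \<eta> \<longleftrightarrow> is_functor C D F \<and> is_functor C D G \<and>
    (\<forall>A\<in>Ob C. \<eta> A \<in> hom D (FO F A) (FO G A)) \<and>
    (\<forall>f\<in>Arr C. Cmp D (\<eta> (Cod C f)) (FM F f) = Cmp D (FM G f) (\<eta> (Dom C f)))"

definition is_nat_iso where
  "is_nat_iso C D F G \<eta> \<longleftrightarrow> is_nat_trans C D F G \<eta> \<and> (\<forall>A\<in>Ob C. is_iso D (\<eta> A))"

definition is_equivalence ::
  "('o1,'m1,'z1) cat_scheme \<Rightarrow> ('o2,'m2,'z2) cat_scheme \<Rightarrow> ('o1,'m1,'o2,'m2,'w) fnctr_scheme \<Rightarrow> bool"
  where
  "is_equivalence C D F \<longleftrightarrow> is_functor C D F \<and>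
    (\<exists>(K::('o2,'m2,'o1,'m1) fnctr) \<eta> \<epsilon>. is_functor D C K \<and>
       is_nat_iso C C (fcomp K F) fid \<eta> \<and> is_nat_iso D D (fcomp F K) fid \<epsilon>)"

record ('o1,'m1,'o2,'m2) monfnctr = "('o1,'m1,'o2,'m2) fnctr" +
  FT :: "'o1 \<Rightarrow> 'o1 \<Rightarrow> 'm2"
  FU :: "'m2"

definition is_monoidal_functor where
  "is_monoidal_functor C D F \<longleftrightarrow> monoidal_category C \<and> monoidal_category D \<and> is_functor C D F \<and>
    (\<forall>A\<in>Ob C. \<forall>B\<in>Ob C. FT F A B \<in> hom D (FO F (Tns C A B)) (Tns D (FO F A) (FO F B))
        \<and> is_iso D (FT F A B)) \<and>
    FU F \<in> hom D (FO F (Unt C)) (Unt D) \<and> is_iso D (FU F) \<and>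
    (\<forall>f\<in>Arr C. \<forall>g\<in>Arr C.
        Cmp D (FT F (Cod C f) (Cod C g)) (FM F (TnsA C f g)) =
        Cmp D (TnsA D (FM F f) (FM F g)) (FT F (Dom C f) (Dom C g))) \<and>
    (\<forall>A\<in>Ob C. \<forall>B\<in>Ob C. \<forall>E\<in>Ob C.
        Cmp D (Asc D (FO F A) (FO F B) (FO F E))
          (Cmp D (TnsA D (FT F A B) (Idt D (FO F E))) (FT F (Tns C A B) E)) =
        Cmp D (TnsA D (Idt D (FO F A)) (FT F B E))
          (Cmp D (FT F A (Tns C B E)) (FM F (Asc C A B E)))) \<and>
    (\<forall>A\<in>Ob C. Cmp D (LU D (FO F A)) (Cmp D (TnsA D (FU F) (Idt D (FO F A))) (FT F (Unt C) A))
        = FM F (LU C A)) \<and>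
    (\<forall>A\<in>Ob C. Cmp D (RU D (FO F A)) (Cmp D (TnsA D (Idt D (FO F A)) (FU F)) (FT F A (Unt C)))
        = FM F (RU C A))"

definition mfcomp where
  "mfcomp E F G = \<lparr>FO = FO F \<circ> FO G, FM = FM F \<circ> FM G,
     FT = (\<lambda>A B. Cmp E (FT F (FO G A) (FO G B)) (FM F (FT G A B))),
     FU = Cmp E (FU F) (FM F (FU G))\<rparr>"

definition mfid where
  "mfid C = \<lparr>FO = id, FM = id, FT = (\<lambda>A B. Idt C (Tns C A B)), FU = Idt C (Unt C)\<rparr>"

definition mf_eq where
  "mf_eq C F G \<longleftrightarrow> (\<forall>A\<in>Ob C. FO F A = FO G A) \<and> (\<forall>f\<in>Arr C. FM F f = FM G f) \<and>
     (\<forall>A\<in>Ob C. \<forall>B\<in>Ob C. FT F A B = FT G A B) \<and> FU F = FU G"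

definition is_monoidal_nat_trans where
  "is_monoidal_nat_trans C D F G \<eta> \<longleftrightarrow>
    is_monoidal_functor C D F \<and> is_monoidal_functor C D G \<and> is_nat_trans C D F G \<eta> \<and>
    (\<forall>A\<in>Ob C. \<forall>B\<in>Ob C.
        Cmp D (FT G A B) (\<eta> (Tns C A B)) = Cmp D (TnsA D (\<eta> A) (\<eta> B)) (FT F A B)) \<and>
    Cmp D (FU G) (\<eta> (Unt C)) = FU F"

definition is_monoidal_nat_iso where
  "is_monoidal_nat_iso C D F G \<eta> \<longleftrightarrow> is_monoidal_nat_trans C D F G \<eta> \<and> (\<forall>A\<in>Ob C. is_iso D (\<eta> A))"

definition is_monoidal_equivalence where
  "is_monoidal_equivalence C D F \<longleftrightarrow> is_monoidal_functor C D F \<and> is_equivalence C D F"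

definition factor_set where
  "factor_set \<Gamma> C \<theta> F \<longleftrightarrow> group \<Gamma> \<and> monoidal_category C \<and>
    (\<forall>\<sigma>\<in>carrier \<Gamma>. is_monoidal_equivalence C C (F \<sigma>)) \<and>
    (\<forall>\<sigma>\<in>carrier \<Gamma>. \<forall>\<tau>\<in>carrier \<Gamma>.
        is_monoidal_nat_iso C C (mfcomp C (F \<sigma>) (F \<tau>)) (F (\<sigma> \<otimes>\<^bsub>\<Gamma>\<^esub> \<tau>)) (\<theta> \<sigma> \<tau>)) \<and>
    mf_eq C (F \<one>\<^bsub>\<Gamma>\<^esub>) (mfid C) \<and>
    (\<forall>\<sigma>\<in>carrier \<Gamma>. \<forall>A\<in>Ob C.
        \<theta> \<one>\<^bsub>\<Gamma>\<^esub> \<sigma> A = Idt C (FO (F \<sigma>) A) \<and> \<theta> \<sigma> \<one>\<^bsub>\<Gamma>\<^esub> A = Idt C (FO (F \<sigma>) A)) \<and>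
    (\<forall>\<sigma>\<in>carrier \<Gamma>. \<forall>\<tau>\<in>carrier \<Gamma>. \<forall>\<gamma>\<in>carrier \<Gamma>. \<forall>A\<in>Ob C.
        Cmp C (\<theta> (\<sigma> \<otimes>\<^bsub>\<Gamma>\<^esub> \<tau>) \<gamma> A) (\<theta> \<sigma> \<tau> (FO (F \<gamma>) A)) =
        Cmp C (\<theta> \<sigma> (\<tau> \<otimes>\<^bsub>\<Gamma>\<^esub> \<gamma>) A) (FM (F \<sigma>) (\<theta> \<tau> \<gamma> A)))"

definition crossed_product ::
  "('g,'x) monoid_scheme \<Rightarrow> ('o,'m,'z) moncat_scheme \<Rightarrow> ('g \<Rightarrow> 'g \<Rightarrow> 'o \<Rightarrow> 'm)
   \<Rightarrow> ('g \<Rightarrow> ('o,'m,'o,'m,'w) monfnctr_scheme) \<Rightarrow> ('o, 'o \<times> 'o \<times> 'm \<times> 'g) cat" where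
  "crossed_product \<Gamma> C \<theta> F = \<lparr>
     Ob = Ob C,
     Arr = {(A, B, u, \<sigma>). A \<in> Ob C \<and> B \<in> Ob C \<and> \<sigma> \<in> carrier \<Gamma> \<and> u \<in> hom C (FO (F \<sigma>) A) B},
     Dom = (\<lambda>(A, B, u, \<sigma>). A),
     Cod = (\<lambda>(A, B, u, \<sigma>). B),
     Idt = (\<lambda>A. (A, A, Idt C A, \<one>\<^bsub>\<Gamma>\<^esub>)),
     Cmp = (\<lambda>(B', E, v, \<tau>) (A, B, u, \<sigma>).
              (A, E, Cmp C v (Cmp C (FM (F \<tau>) u) (inv_arr C (\<theta> \<tau> \<sigma> A))), \<tau> \<otimes>\<^bsub>\<Gamma>\<^esub> \<sigma>)) \<rparr>"

definition xp_grade :: "'o \<times> 'o \<times> 'm \<times> 'g \<Rightarrow> 'g" where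
  "xp_grade f = snd (snd (snd f))"

definition graded_equivalence ::
  "('o1,'m1,'z1) cat_scheme \<Rightarrow> ('m1 \<Rightarrow> 'g) \<Rightarrow> ('o2,'m2,'z2) cat_scheme \<Rightarrow> ('m2 \<Rightarrow> 'g)
   \<Rightarrow> ('o1,'m1,'o2,'m2,'w) fnctr_scheme \<Rightarrow> bool" where
  "graded_equivalence C g1 D g2 \<Phi> \<longleftrightarrow> is_equivalence C D \<Phi> \<and> (\<forall>f\<in>Arr C. g2 (FM \<Phi> f) = g1 f)"

end

theory Submission
  imports Defs
begin

text \<open>
  The transported factor set is the conjugate \<open>F'\<^sup>\<sigma> = G F\<^sup>\<sigma> H\<close>, except that \<open>F'\<^sup>1\<close> must be the
  identity on the nose; the comparison \<open>F'\<^sup>\<sigma> \<cong> G F\<^sup>\<sigma> H\<close> is the identity for \<open>\<sigma> \<noteq> 1\<close> and the inverse of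
  the counit for \<open>\<sigma> = 1\<close>. The cocycle \<open>\<theta>'\<close> is \<open>G \<theta> H\<close> with the unit \<open>\<beta>\<close> inserted between \<open>F\<^sup>\<sigma>\<close> and
  \<open>F\<^sup>\<tau>\<close>, conjugated by these comparisons. To verify the unit axioms the counit is first replaced
  by one satisfying the triangle identities with \<open>\<beta>\<close>; then everything follows from naturality,
  the cocycle identity for \<open>\<theta>\<close> and the triangle identities.

  The isomorphisms \<open>\<phi>\<^sub>\<sigma> : F'\<^sup>\<sigma> G \<cong> G F\<^sup>\<sigma>\<close> obtained from \<open>\<beta>\<close> intertwine \<open>\<theta>'\<close> and \<open>\<theta>\<close>, so
  \<open>(A, B, u, \<sigma>) \<mapsto> (G A, G B, G u \<circ> \<phi>\<^sub>\<sigma> A, \<sigma>)\<close> is a grade-preserving functor between the crossed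
  products. It is fully faithful and essentially surjective because \<open>G\<close> is and the \<open>\<phi>\<^sub>\<sigma>\<close> are
  invertible, hence an equivalence.
\<close>

lemma cat_Dom_Ob[simp]: "category C \<Longrightarrow> f \<in> Arr C \<Longrightarrow> Dom C f \<in> Ob C"
  unfolding category_def by blast
lemma cat_Cod_Ob[simp]: "category C \<Longrightarrow> f \<in> Arr C \<Longrightarrow> Cod C f \<in> Ob C"
  unfolding category_def by blast
lemma cat_Idt[simp]: "category C \<Longrightarrow> A \<in> Ob C \<Longrightarrow> Idt C A \<in> Arr C"
  unfolding category_def hom_def by blast
lemma cat_Idt_Dom[simp]: "category C \<Longrightarrow> A \<in> Ob C \<Longrightarrow> Dom C (Idt C A) = A"
  unfolding category_def hom_def by blast
lemma cat_Idt_Cod[simp]: "category C \<Longrightarrow> A \<in> Ob C \<Longrightarrow> Cod C (Idt C A) = A"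
  unfolding category_def hom_def by blast
lemma cat_Cmp[simp]: "category C \<Longrightarrow> f \<in> Arr C \<Longrightarrow> g \<in> Arr C \<Longrightarrow> Cod C f = Dom C g \<Longrightarrow> Cmp C g f \<in> Arr C"
  unfolding category_def hom_def by blast
lemma cat_Cmp_Dom[simp]: "category C \<Longrightarrow> f \<in> Arr C \<Longrightarrow> g \<in> Arr C \<Longrightarrow> Cod C f = Dom C g \<Longrightarrow> Dom C (Cmp C g f) = Dom C f"
  unfolding category_def hom_def by blast
lemma cat_Cmp_Cod[simp]: "category C \<Longrightarrow> f \<in> Arr C \<Longrightarrow> g \<in> Arr C \<Longrightarrow> Cod C f = Dom C g \<Longrightarrow> Cod C (Cmp C g f) = Cod C g"
  unfolding category_def hom_def by blast
lemma cat_assoc: "category C \<Longrightarrow> f \<in> Arr C \<Longrightarrow> g \<in> Arr C \<Longrightarrow> h \<in> Arr C \<Longrightarrow> Cod C f = Dom C g \<Longrightarrow> Cod C g = Dom C h \<Longrightarrow>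
   Cmp C (Cmp C h g) f = Cmp C h (Cmp C g f)"
proof -
  assume c: "category C" and *: "f \<in> Arr C" "g \<in> Arr C" "h \<in> Arr C" "Cod C f = Dom C g" "Cod C g = Dom C h"
  from c have "\<forall>f\<in>Arr C. \<forall>g\<in>Arr C. \<forall>h\<in>Arr C. Cod C f = Dom C g \<and> Cod C g = Dom C h \<longrightarrow>
        Cmp C h (Cmp C g f) = Cmp C (Cmp C h g) f" unfolding category_def by blast
  with * show ?thesis by simp
qed
lemma cat_idl[simp]: "category C \<Longrightarrow> f \<in> Arr C \<Longrightarrow> Cod C f = B \<Longrightarrow> Cmp C (Idt C B) f = f"
  unfolding category_def by blast
lemma cat_idr[simp]: "category C \<Longrightarrow> f \<in> Arr C \<Longrightarrow> Dom C f = A \<Longrightarrow> Cmp C f (Idt C A) = f"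
  unfolding category_def by blast

lemma inv_arr_props:
  assumes "is_iso C f"
  shows "inv_arr C f \<in> Arr C" "Dom C (inv_arr C f) = Cod C f" "Cod C (inv_arr C f) = Dom C f"
    "Cmp C (inv_arr C f) f = Idt C (Dom C f)" "Cmp C f (inv_arr C f) = Idt C (Cod C f)"
proof -
  have "\<exists>g. g \<in> Defs.hom C (Cod C f) (Dom C f) \<and> Cmp C g f = Idt C (Dom C f) \<and> Cmp C f g = Idt C (Cod C f)"
    using assms unfolding is_iso_def by blast
  then have "inv_arr C f \<in> Defs.hom C (Cod C f) (Dom C f) \<and> Cmp C (inv_arr C f) f = Idt C (Dom C f) \<and> Cmp C f (inv_arr C f) = Idt C (Cod C f)"
    unfolding inv_arr_def by (rule someI_ex)
  then show "inv_arr C f \<in> Arr C" "Dom C (inv_arr C f) = Cod C f" "Cod C (inv_arr C f) = Dom C f"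
    "Cmp C (inv_arr C f) f = Idt C (Dom C f)" "Cmp C f (inv_arr C f) = Idt C (Cod C f)"
    by (auto simp: hom_def)
qed

lemma is_iso_Arr[simp]: "is_iso C f \<Longrightarrow> f \<in> Arr C" by (simp add: is_iso_def)
lemma inv_Arr[simp]: "is_iso C f \<Longrightarrow> inv_arr C f \<in> Arr C" by (rule inv_arr_props)
lemma inv_Dom[simp]: "is_iso C f \<Longrightarrow> Dom C (inv_arr C f) = Cod C f" by (rule inv_arr_props)
lemma inv_Cod[simp]: "is_iso C f \<Longrightarrow> Cod C (inv_arr C f) = Dom C f" by (rule inv_arr_props)
lemma inv_left[simp]: "is_iso C f \<Longrightarrow> Cmp C (inv_arr C f) f = Idt C (Dom C f)" by (rule inv_arr_props)
lemma inv_right[simp]: "is_iso C f \<Longrightarrow> Cmp C f (inv_arr C f) = Idt C (Cod C f)" by (rule inv_arr_props)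

lemma inv_left2[simp]: "category C \<Longrightarrow> is_iso C f \<Longrightarrow> x \<in> Arr C \<Longrightarrow> Cod C x = Dom C f \<Longrightarrow>
   Cmp C (inv_arr C f) (Cmp C f x) = x"
  by (simp add: cat_assoc[symmetric])
lemma inv_right2[simp]: "category C \<Longrightarrow> is_iso C f \<Longrightarrow> x \<in> Arr C \<Longrightarrow> Cod C x = Cod C f \<Longrightarrow>
   Cmp C f (Cmp C (inv_arr C f) x) = x"
  by (simp add: cat_assoc[symmetric])

lemma iso_intro:
  assumes "category C" "f \<in> Arr C" "g \<in> Arr C" "Dom C g = Cod C f" "Cod C g = Dom C f"
    "Cmp C g f = Idt C (Dom C f)" "Cmp C f g = Idt C (Cod C f)"
  shows "is_iso C f"
  using assms unfolding is_iso_def hom_def by auto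

lemma inv_unique:
  assumes "category C" "is_iso C f" "g \<in> Arr C" "Dom C g = Cod C f" "Cod C g = Dom C f"
    "Cmp C g f = Idt C (Dom C f)"
  shows "inv_arr C f = g"
proof -
  have "inv_arr C f = Cmp C (Cmp C g f) (inv_arr C f)" using assms by simp
  also have "\<dots> = g" using assms(1-5) by (simp add: cat_assoc)
  finally show ?thesis .
qed

lemma iso_Idt[simp]: "category C \<Longrightarrow> A \<in> Ob C \<Longrightarrow> is_iso C (Idt C A)"
  by (rule iso_intro[where g="Idt C A"]) auto
lemma inv_Idt[simp]: "category C \<Longrightarrow> A \<in> Ob C \<Longrightarrow> inv_arr C (Idt C A) = Idt C A"
  by (rule inv_unique) auto

lemma iso_inv[simp]: "category C \<Longrightarrow> is_iso C f \<Longrightarrow> is_iso C (inv_arr C f)"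
  by (rule iso_intro[where g=f]) auto
lemma inv_inv[simp]: "category C \<Longrightarrow> is_iso C f \<Longrightarrow> inv_arr C (inv_arr C f) = f"
  by (rule inv_unique) auto

lemma iso_Cmp[simp]: "category C \<Longrightarrow> is_iso C f \<Longrightarrow> is_iso C g \<Longrightarrow> Cod C f = Dom C g \<Longrightarrow> is_iso C (Cmp C g f)"
  by (rule iso_intro[where g="Cmp C (inv_arr C f) (inv_arr C g)"]) (auto simp: cat_assoc)

lemma inv_Cmp: "category C \<Longrightarrow> is_iso C f \<Longrightarrow> is_iso C g \<Longrightarrow> Cod C f = Dom C g \<Longrightarrow>
   inv_arr C (Cmp C g f) = Cmp C (inv_arr C f) (inv_arr C g)"
  by (rule inv_unique) (auto simp: cat_assoc)

lemma iso_cancel_right: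
  assumes "category C" "is_iso C f" "x \<in> Arr C" "y \<in> Arr C" "Dom C x = Cod C f" "Dom C y = Cod C f"
   "Cmp C x f = Cmp C y f"
  shows "x = y"
proof -
  have "x = Cmp C (Cmp C x f) (inv_arr C f)" using assms(1-6) by (simp add: cat_assoc)
  also have "\<dots> = Cmp C (Cmp C y f) (inv_arr C f)" using assms by simp
  also have "\<dots> = y" using assms(1-6) by (simp add: cat_assoc)
  finally show ?thesis .
qed

lemma iso_cancel_left:
  assumes "category C" "is_iso C f" "x \<in> Arr C" "y \<in> Arr C" "Cod C x = Dom C f" "Cod C y = Dom C f"
   "Cmp C f x = Cmp C f y"
  shows "x = y"
proof -
  have "x = Cmp C (inv_arr C f) (Cmp C f x)" using assms(1-6) by simp
  also have "\<dots> = Cmp C (inv_arr C f) (Cmp C f y)" using assms by simp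
  also have "\<dots> = y" using assms(1-6) by simp
  finally show ?thesis .
qed

lemma iso_solve: "category C \<Longrightarrow> is_iso C h \<Longrightarrow> a \<in> Arr C \<Longrightarrow> Dom C a = Cod C h \<Longrightarrow> Cmp C a h = b \<Longrightarrow>
  Cmp C b (inv_arr C h) = a"
  by (auto simp: cat_assoc)

lemma cat_eq_extend:
  assumes "category C" "Cmp C g f = Cmp C g' f'" "f \<in> Arr C" "g \<in> Arr C" "Cod C f = Dom C g"
    "f' \<in> Arr C" "g' \<in> Arr C" "Cod C f' = Dom C g'"
    "x \<in> Arr C" "Cod C x = Dom C f"
  shows "Cmp C g (Cmp C f x) = Cmp C g' (Cmp C f' x)"
proof -
  have "Dom C f' = Dom C f"
    using cat_Cmp_Dom[of C f g] cat_Cmp_Dom[of C f' g'] assms by simp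
  then show ?thesis using assms by (simp add: cat_assoc[symmetric])
qed

lemma cat_eq_extend1:
  assumes "category C" "Cmp C g f = h" "f \<in> Arr C" "g \<in> Arr C" "Cod C f = Dom C g"
    "x \<in> Arr C" "Cod C x = Dom C f"
  shows "Cmp C g (Cmp C f x) = Cmp C h x"
  using assms by (simp add: cat_assoc[symmetric])

lemma functor_dom_cat: "is_functor C D F \<Longrightarrow> category C" unfolding is_functor_def by blast
lemma functor_cod_cat: "is_functor C D F \<Longrightarrow> category D" unfolding is_functor_def by blast
lemma functor_Ob[simp]: "is_functor C D F \<Longrightarrow> A \<in> Ob C \<Longrightarrow> FO F A \<in> Ob D"
  unfolding is_functor_def by blast
lemma functor_Arr[simp]: "is_functor C D F \<Longrightarrow> f \<in> Arr C \<Longrightarrow> FM F f \<in> Arr D"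
  unfolding is_functor_def hom_def by blast
lemma functor_Dom[simp]: "is_functor C D F \<Longrightarrow> f \<in> Arr C \<Longrightarrow> Dom D (FM F f) = FO F (Dom C f)"
  unfolding is_functor_def hom_def by blast
lemma functor_Cod[simp]: "is_functor C D F \<Longrightarrow> f \<in> Arr C \<Longrightarrow> Cod D (FM F f) = FO F (Cod C f)"
  unfolding is_functor_def hom_def by blast
lemma functor_Idt[simp]: "is_functor C D F \<Longrightarrow> A \<in> Ob C \<Longrightarrow> FM F (Idt C A) = Idt D (FO F A)"
  unfolding is_functor_def by blast
lemma functor_Cmp: "is_functor C D F \<Longrightarrow> f \<in> Arr C \<Longrightarrow> g \<in> Arr C \<Longrightarrow> Cod C f = Dom C g \<Longrightarrow>
   FM F (Cmp C g f) = Cmp D (FM F g) (FM F f)"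
  unfolding is_functor_def by blast

lemma functor_iso[simp]:
  assumes F: "is_functor C D F" and f: "is_iso C f"
  shows "is_iso D (FM F f)"
  by (rule iso_intro[where g="FM F (inv_arr C f)"])
    (use F f functor_dom_cat[OF F] functor_cod_cat[OF F] in \<open>simp_all add: functor_Cmp[OF F, symmetric]\<close>)

lemma functor_inv:
  assumes F: "is_functor C D F" and f: "is_iso C f"
  shows "inv_arr D (FM F f) = FM F (inv_arr C f)"
  by (rule inv_unique)
    (use F f functor_dom_cat[OF F] functor_cod_cat[OF F] in \<open>simp_all add: functor_Cmp[OF F, symmetric]\<close>)

lemmas functor_simps = functor_Ob functor_Arr functor_Dom functor_Cod functor_Idt functor_iso

lemma fcomp_FO[simp]: "FO (fcomp F G) = FO F \<circ> FO G" by (simp add: fcomp_def)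
lemma fcomp_FM[simp]: "FM (fcomp F G) = FM F \<circ> FM G" by (simp add: fcomp_def)
lemma fid_FO[simp]: "FO fid = id" by (simp add: fid_def)
lemma fid_FM[simp]: "FM fid = id" by (simp add: fid_def)

lemma functor_fcomp: assumes G: "is_functor C D G" and F: "is_functor D E F" shows "is_functor C E (fcomp F G)"
  unfolding is_functor_def[of C E] using G F
  by (simp add: functor_dom_cat[OF G] functor_cod_cat[OF F] hom_def functor_Cmp[OF G] functor_Cmp[OF F])

lemma functor_fid: "category C \<Longrightarrow> is_functor C C fid"
  unfolding is_functor_def by (auto simp: hom_def)

lemma nt_functor1: "is_nat_trans C D F G \<eta> \<Longrightarrow> is_functor C D F" unfolding is_nat_trans_def by blast
lemma nt_Arr[simp]: "is_nat_trans C D F G \<eta> \<Longrightarrow> A \<in> Ob C \<Longrightarrow> \<eta> A \<in> Arr D"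
  unfolding is_nat_trans_def hom_def by blast
lemma nt_Dom[simp]: "is_nat_trans C D F G \<eta> \<Longrightarrow> A \<in> Ob C \<Longrightarrow> Dom D (\<eta> A) = FO F A"
  unfolding is_nat_trans_def hom_def by blast
lemma nt_Cod[simp]: "is_nat_trans C D F G \<eta> \<Longrightarrow> A \<in> Ob C \<Longrightarrow> Cod D (\<eta> A) = FO G A"
  unfolding is_nat_trans_def hom_def by blast
lemma nt_nat: "is_nat_trans C D F G \<eta> \<Longrightarrow> f \<in> Arr C \<Longrightarrow>
   Cmp D (\<eta> (Cod C f)) (FM F f) = Cmp D (FM G f) (\<eta> (Dom C f))"
  unfolding is_nat_trans_def by blast

lemma ni_nt: "is_nat_iso C D F G \<eta> \<Longrightarrow> is_nat_trans C D F G \<eta>" unfolding is_nat_iso_def by blast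
lemma ni_iso[simp]: "is_nat_iso C D F G \<eta> \<Longrightarrow> A \<in> Ob C \<Longrightarrow> is_iso D (\<eta> A)"
  unfolding is_nat_iso_def by blast

lemmas nt_simps = nt_Arr nt_Dom nt_Cod

lemma nt_intro:
  assumes "is_functor C D F" "is_functor C D G"
   "\<And>A. A \<in> Ob C \<Longrightarrow> \<eta> A \<in> Arr D \<and> Dom D (\<eta> A) = FO F A \<and> Cod D (\<eta> A) = FO G A"
   "\<And>f. f \<in> Arr C \<Longrightarrow> Cmp D (\<eta> (Cod C f)) (FM F f) = Cmp D (FM G f) (\<eta> (Dom C f))"
  shows "is_nat_trans C D F G \<eta>"
  unfolding is_nat_trans_def hom_def using assms by blast

lemma is_functor_cong: "FO F1 = FO F2 \<Longrightarrow> FM F1 = FM F2 \<Longrightarrow> is_functor C D F1 = is_functor C D F2"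
  unfolding is_functor_def by simp

definition fully_faithful where
  "fully_faithful C D F \<longleftrightarrow> (\<forall>A\<in>Ob C. \<forall>B\<in>Ob C. \<forall>g. g \<in> Arr D \<and> Dom D g = FO F A \<and> Cod D g = FO F B \<longrightarrow>
     (\<exists>!f. f \<in> Arr C \<and> Dom C f = A \<and> Cod C f = B \<and> FM F f = g))"

definition ess_surj where
  "ess_surj C D F \<longleftrightarrow> (\<forall>Y\<in>Ob D. \<exists>A\<in>Ob C. \<exists>i. i \<in> Arr D \<and> Dom D i = FO F A \<and> Cod D i = Y \<and> is_iso D i)"

lemma fully_faithfulD: "fully_faithful C D F \<Longrightarrow> A \<in> Ob C \<Longrightarrow> B \<in> Ob C \<Longrightarrow> g \<in> Arr D \<Longrightarrow> Dom D g = FO F A \<Longrightarrow> Cod D g = FO F B \<Longrightarrow>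
     (\<exists>!f. f \<in> Arr C \<and> Dom C f = A \<and> Cod C f = B \<and> FM F f = g)"
  unfolding fully_faithful_def by blast

lemma fully_faithful_cancel:
  assumes "fully_faithful C D F" "is_functor C D F" "f \<in> Arr C" "g \<in> Arr C" "Dom C f = Dom C g" "Cod C f = Cod C g"
    "FM F f = FM F g"
  shows "f = g"
  using fully_faithfulD[OF assms(1), of "Dom C f" "Cod C f" "FM F f"] assms functor_dom_cat[OF assms(2)] by auto

lemma faithful_if_nat_iso_id:
  assumes K: "is_functor D C K" and F: "is_functor C D F" and eta: "is_nat_iso C C (fcomp K F) fid \<eta>"
    and f: "f \<in> Arr C" and g: "g \<in> Arr C" "Dom C f = Dom C g" "Cod C f = Cod C g"
    and eq: "FM F f = FM F g"
  shows "f = g"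
proof -
  have c: "category C" using F by (rule functor_dom_cat)
  have nt: "is_nat_trans C C (fcomp K F) fid \<eta>" using eta by (rule ni_nt)
  have a: "Cmp C (\<eta> (Cod C f)) (FM K (FM F f)) = Cmp C f (\<eta> (Dom C f))"
    using nt_nat[OF nt f] by simp
  have b: "Cmp C (\<eta> (Cod C g)) (FM K (FM F g)) = Cmp C g (\<eta> (Dom C g))"
    using nt_nat[OF nt g(1)] by simp
  have "Cmp C f (\<eta> (Dom C f)) = Cmp C g (\<eta> (Dom C f))" using a b g eq by simp
  moreover have o: "Dom C f \<in> Ob C" using c f by simp
  moreover have "is_iso C (\<eta> (Dom C f))" using ni_iso[OF eta o] .
  moreover have "Dom C f = Cod C (\<eta> (Dom C f))" "Dom C g = Cod C (\<eta> (Dom C f))" using nt_Cod[OF nt o] g by simp_all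
  ultimately show ?thesis
    using iso_cancel_right[OF c, of "\<eta> (Dom C f)" f g] f g(1) by blast
qed

lemma equivalence_ess_surj:
  assumes "is_equivalence C D F"
  shows "ess_surj C D F"
proof -
  obtain K :: "('d,'e,'a,'b) fnctr" and \<epsilon> where K: "is_functor D C K"
    and eps: "is_nat_iso D D (fcomp F K) fid \<epsilon>"
    using assms unfolding is_equivalence_def by blast
  have nt: "is_nat_trans D D (fcomp F K) fid \<epsilon>" using eps by (rule ni_nt)
  show ?thesis
    unfolding ess_surj_def
  proof
    fix Y assume Y: "Y \<in> Ob D"
    show "\<exists>A\<in>Ob C. \<exists>i. i \<in> Arr D \<and> Dom D i = FO F A \<and> Cod D i = Y \<and> is_iso D i"
      using Y K nt_Arr[OF nt Y] nt_Dom[OF nt Y] nt_Cod[OF nt Y] ni_iso[OF eps Y]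
      by (intro bexI[where x="FO K Y"] exI[where x="\<epsilon> Y"]) auto
  qed
qed

text \<open>The preimage of \<open>g : F A \<rightarrow> F B\<close> is \<open>\<eta>\<^sub>B \<circ> K g \<circ> \<eta>\<^sub>A\<^sup>-\<^sup>1\<close>; that it maps to \<open>g\<close>
  uses faithfulness of \<open>K\<close>, which comes from the counit being invertible.\<close>
lemma equivalence_fully_faithful:
  assumes E: "is_equivalence C D F"
  shows "fully_faithful C D F"
proof -
  have F: "is_functor C D F" using E unfolding is_equivalence_def by blast
  obtain K :: "('d,'e,'a,'b) fnctr" and \<eta> \<epsilon> where K: "is_functor D C K"
    and eta: "is_nat_iso C C (fcomp K F) fid \<eta>" and eps: "is_nat_iso D D (fcomp F K) fid \<epsilon>"
    using E unfolding is_equivalence_def by blast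
  have c: "category C" using F by (rule functor_dom_cat)
  have nt: "is_nat_trans C C (fcomp K F) fid \<eta>" using eta by (rule ni_nt)
  show ?thesis
    unfolding fully_faithful_def
  proof (intro ballI allI impI)
    fix A B g assume A: "A \<in> Ob C" and B: "B \<in> Ob C" and g: "g \<in> Arr D \<and> Dom D g = FO F A \<and> Cod D g = FO F B"
    note eA = nt_Arr[OF nt A] nt_Dom[OF nt A] nt_Cod[OF nt A] ni_iso[OF eta A]
    note eB = nt_Arr[OF nt B] nt_Dom[OF nt B] nt_Cod[OF nt B] ni_iso[OF eta B]
    define f where "f = Cmp C (\<eta> B) (Cmp C (FM K g) (inv_arr C (\<eta> A)))"
    have Kg: "FM K g \<in> Arr C" "Dom C (FM K g) = FO K (FO F A)" "Cod C (FM K g) = FO K (FO F B)"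
      using g K by auto
    have f: "f \<in> Arr C" "Dom C f = A" "Cod C f = B"
      unfolding f_def using eA eB Kg c by auto
    have "Cmp C (\<eta> B) (FM K (FM F f)) = Cmp C f (\<eta> A)"
      using nt_nat[OF nt f(1)] f by simp
    also have "\<dots> = Cmp C (\<eta> B) (FM K g)"
      unfolding f_def using eA eB Kg c by (simp add: cat_assoc)
    finally have "FM K (FM F f) = FM K g"
      using iso_cancel_left[OF c, of "\<eta> B" "FM K (FM F f)" "FM K g"] eB Kg F K f by simp
    then have Ff: "FM F f = g"
      using faithful_if_nat_iso_id[OF F K eps, of "FM F f" g] F f g by simp
    show "\<exists>!f. f \<in> Arr C \<and> Dom C f = A \<and> Cod C f = B \<and> FM F f = g"
    proof
      show "f \<in> Arr C \<and> Dom C f = A \<and> Cod C f = B \<and> FM F f = g" using f Ff by simp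
      fix f' assume "f' \<in> Arr C \<and> Dom C f' = A \<and> Cod C f' = B \<and> FM F f' = g"
      then show "f' = f"
        using faithful_if_nat_iso_id[OF K F eta, of f' f] f Ff by simp
    qed
  qed
qed

text \<open>Conversely, a fully faithful functor \<open>F\<close> together with a choice of isomorphisms
  \<open>\<iota>\<^sub>Y : F (K\<^sub>0 Y) \<rightarrow> Y\<close> has a quasi-inverse \<open>K\<close>: on arrows, \<open>K g\<close> is the unique preimage
  of \<open>\<iota>\<^sup>-\<^sup>1 \<circ> g \<circ> \<iota>\<close>.\<close>
locale ff_quasi_inverse =
  fixes C :: "('a,'b,'z1) cat_scheme" and D :: "('d,'e,'z2) cat_scheme"
    and F :: "('a,'b,'d,'e,'w) fnctr_scheme" and K0 :: "'d \<Rightarrow> 'a" and \<iota> :: "'d \<Rightarrow> 'e"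
  assumes F: "is_functor C D F" and ff: "fully_faithful C D F"
    and K0: "\<And>Y. Y \<in> Ob D \<Longrightarrow> K0 Y \<in> Ob C"
    and \<iota>: "\<And>Y. Y \<in> Ob D \<Longrightarrow> \<iota> Y \<in> Arr D \<and> Dom D (\<iota> Y) = FO F (K0 Y) \<and> Cod D (\<iota> Y) = Y \<and> is_iso D (\<iota> Y)"
begin

lemma cats: "category C" "category D"
  using F by (rule functor_dom_cat, rule functor_cod_cat)

lemma \<iota>_simps[simp]: "Y \<in> Ob D \<Longrightarrow> \<iota> Y \<in> Arr D" "Y \<in> Ob D \<Longrightarrow> Dom D (\<iota> Y) = FO F (K0 Y)"
  "Y \<in> Ob D \<Longrightarrow> Cod D (\<iota> Y) = Y" "Y \<in> Ob D \<Longrightarrow> is_iso D (\<iota> Y)"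
  using \<iota> by blast+

definition preimage where
  "preimage A B g = (THE f. f \<in> Arr C \<and> Dom C f = A \<and> Cod C f = B \<and> FM F f = g)"

lemma preimage:
  assumes "A \<in> Ob C" "B \<in> Ob C" "g \<in> Arr D" "Dom D g = FO F A" "Cod D g = FO F B"
  shows "preimage A B g \<in> Arr C" "Dom C (preimage A B g) = A" "Cod C (preimage A B g) = B"
    "FM F (preimage A B g) = g"
proof -
  have "preimage A B g \<in> Arr C \<and> Dom C (preimage A B g) = A \<and> Cod C (preimage A B g) = B \<and> FM F (preimage A B g) = g"
    unfolding preimage_def by (rule theI') (rule fully_faithfulD[OF ff assms])
  then show "preimage A B g \<in> Arr C" "Dom C (preimage A B g) = A" "Cod C (preimage A B g) = B"
    "FM F (preimage A B g) = g" by auto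
qed

lemma preimage_unique:
  assumes "f \<in> Arr C" "Dom C f = A" "Cod C f = B" "FM F f = g"
  shows "preimage A B g = f"
proof -
  have "\<exists>!f. f \<in> Arr C \<and> Dom C f = A \<and> Cod C f = B \<and> FM F f = g"
    using assms cats F by (intro fully_faithfulD[OF ff]) auto
  then show ?thesis unfolding preimage_def using assms by (intro the1_equality) auto
qed

definition KM where
  "KM g = preimage (K0 (Dom D g)) (K0 (Cod D g)) (Cmp D (inv_arr D (\<iota> (Cod D g))) (Cmp D g (\<iota> (Dom D g))))"

definition K :: "('d,'e,'a,'b) fnctr" where "K = \<lparr>FO = K0, FM = KM\<rparr>"

lemma KM:
  assumes g: "g \<in> Arr D"
  shows "KM g \<in> Arr C" "Dom C (KM g) = K0 (Dom D g)" "Cod C (KM g) = K0 (Cod D g)"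
    "FM F (KM g) = Cmp D (inv_arr D (\<iota> (Cod D g))) (Cmp D g (\<iota> (Dom D g)))"
proof -
  have o: "Dom D g \<in> Ob D" "Cod D g \<in> Ob D" using cats g by auto
  then show "KM g \<in> Arr C" "Dom C (KM g) = K0 (Dom D g)" "Cod C (KM g) = K0 (Cod D g)"
    "FM F (KM g) = Cmp D (inv_arr D (\<iota> (Cod D g))) (Cmp D g (\<iota> (Dom D g)))"
    unfolding KM_def using preimage[OF K0 K0] g cats by simp_all
qed

lemma KM_Cmp:
  assumes g: "g \<in> Arr D" and h: "h \<in> Arr D" and gh: "Cod D g = Dom D h"
  shows "KM (Cmp D h g) = Cmp C (KM h) (KM g)"
  unfolding KM_def[of "Cmp D h g"]
proof (rule preimage_unique)
  have o: "Dom D g \<in> Ob D" "Cod D g \<in> Ob D" "Cod D h \<in> Ob D" using g h cats by auto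
  show "Cmp C (KM h) (KM g) \<in> Arr C" "Dom C (Cmp C (KM h) (KM g)) = K0 (Dom D (Cmp D h g))"
    "Cod C (Cmp C (KM h) (KM g)) = K0 (Cod D (Cmp D h g))"
    using KM[OF g] KM[OF h] gh g h cats by auto
  have "FM F (Cmp C (KM h) (KM g)) = Cmp D (FM F (KM h)) (FM F (KM g))"
    using KM[OF g] KM[OF h] gh by (simp add: functor_Cmp[OF F])
  also have "\<dots> = Cmp D (inv_arr D (\<iota> (Cod D h))) (Cmp D (Cmp D h g) (\<iota> (Dom D g)))"
    using KM[OF g] KM[OF h] o g h gh cats by (simp add: cat_assoc)
  finally show "FM F (Cmp C (KM h) (KM g)) =
      Cmp D (inv_arr D (\<iota> (Cod D (Cmp D h g)))) (Cmp D (Cmp D h g) (\<iota> (Dom D (Cmp D h g))))"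
    using g h gh cats by simp
qed

lemma K_functor: "is_functor D C K"
  unfolding is_functor_def
proof (intro conjI ballI impI)
  show "category D" "category C" by (simp_all add: cats)
  show "FO K Y \<in> Ob C" if "Y \<in> Ob D" for Y using K0[OF that] unfolding K_def by simp
  show "FM K g \<in> Defs.hom C (FO K (Dom D g)) (FO K (Cod D g))" if "g \<in> Arr D" for g
    using KM[OF that] unfolding K_def hom_def by simp
  show "FM K (Idt D Y) = Idt C (FO K Y)" if Y: "Y \<in> Ob D" for Y
    unfolding K_def KM_def using Y K0[OF Y] cats F by (simp add: preimage_unique)
  show "FM K (Cmp D h g) = Cmp C (FM K h) (FM K g)"
    if "g \<in> Arr D" "h \<in> Arr D" "Cod D g = Dom D h" for g h
    unfolding K_def using KM_Cmp[OF that] by simp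
qed

lemma counit_nat_iso: "is_nat_iso D D (fcomp F K) fid \<iota>"
  unfolding is_nat_iso_def is_nat_trans_def
proof (intro conjI ballI)
  show "is_functor D D (fcomp F K)" using K_functor F by (rule functor_fcomp)
  show "is_functor D D fid" using cats by (simp add: functor_fid)
  show "\<iota> Y \<in> Defs.hom D (FO (fcomp F K) Y) (FO fid Y)" "is_iso D (\<iota> Y)" if "Y \<in> Ob D" for Y
    using that unfolding K_def hom_def by simp_all
  show "Cmp D (\<iota> (Cod D g)) (FM (fcomp F K) g) = Cmp D (FM fid g) (\<iota> (Dom D g))" if g: "g \<in> Arr D" for g
    unfolding K_def using KM[OF g] g cats by (simp add: cat_assoc[symmetric])
qed

definition \<eta> where "\<eta> A = preimage (K0 (FO F A)) A (\<iota> (FO F A))"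
definition \<eta>_inv where "\<eta>_inv A = preimage A (K0 (FO F A)) (inv_arr D (\<iota> (FO F A)))"

lemma \<eta>:
  assumes "A \<in> Ob C"
  shows "\<eta> A \<in> Arr C" "Dom C (\<eta> A) = K0 (FO F A)" "Cod C (\<eta> A) = A" "FM F (\<eta> A) = \<iota> (FO F A)"
    "\<eta>_inv A \<in> Arr C" "Dom C (\<eta>_inv A) = A" "Cod C (\<eta>_inv A) = K0 (FO F A)"
    "FM F (\<eta>_inv A) = inv_arr D (\<iota> (FO F A))"
  unfolding \<eta>_def \<eta>_inv_def using preimage K0[of "FO F A"] F assms cats by auto

lemma \<eta>_iso: "A \<in> Ob C \<Longrightarrow> is_iso C (\<eta> A)"
proof (rule iso_intro[OF cats(1) _ \<eta>(5)])
  assume A: "A \<in> Ob C"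
  note a = \<eta>[OF A]
  have o: "FO F A \<in> Ob D" "K0 (FO F A) \<in> Ob C" using F A K0 by simp_all
  show "\<eta> A \<in> Arr C" "Dom C (\<eta>_inv A) = Cod C (\<eta> A)" "Cod C (\<eta>_inv A) = Dom C (\<eta> A)" using a by simp_all
  have "FM F (Cmp C (\<eta>_inv A) (\<eta> A)) = FM F (Idt C (K0 (FO F A)))"
    "FM F (Cmp C (\<eta> A) (\<eta>_inv A)) = FM F (Idt C A)"
    using a o A cats F by (simp_all add: functor_Cmp[OF F])
  then show "Cmp C (\<eta>_inv A) (\<eta> A) = Idt C (Dom C (\<eta> A))" "Cmp C (\<eta> A) (\<eta>_inv A) = Idt C (Cod C (\<eta> A))"
    using fully_faithful_cancel[OF ff F] a o A cats by simp_all
qed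

lemma unit_nat_iso: "is_nat_iso C C (fcomp K F) fid \<eta>"
  unfolding is_nat_iso_def is_nat_trans_def
proof (intro conjI ballI)
  show "is_functor C C (fcomp K F)" using F K_functor by (rule functor_fcomp)
  show "is_functor C C fid" using cats by (simp add: functor_fid)
  show "\<eta> A \<in> Defs.hom C (FO (fcomp K F) A) (FO fid A)" "is_iso C (\<eta> A)" if "A \<in> Ob C" for A
    using \<eta>[OF that] \<eta>_iso[OF that] unfolding K_def hom_def by simp_all
  show "Cmp C (\<eta> (Cod C f)) (FM (fcomp K F) f) = Cmp C (FM fid f) (\<eta> (Dom C f))" if f: "f \<in> Arr C" for f
  proof -
    have o: "Dom C f \<in> Ob C" "Cod C f \<in> Ob C" "FO F (Dom C f) \<in> Ob D" "FO F (Cod C f) \<in> Ob D"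
      using f cats F by auto
    note a = \<eta>[OF o(1)] \<eta>[OF o(2)] \<iota>_simps[OF o(3)] \<iota>_simps[OF o(4)]
    have Ff: "FM F f \<in> Arr D" "Dom D (FM F f) = FO F (Dom C f)" "Cod D (FM F f) = FO F (Cod C f)"
      using F f by auto
    note b = KM[OF Ff(1)]
    have "FM F (Cmp C (\<eta> (Cod C f)) (KM (FM F f))) = FM F (Cmp C f (\<eta> (Dom C f)))"
      using a b Ff f cats K0 by (simp add: functor_Cmp[OF F] cat_assoc[symmetric])
    then show ?thesis
      using fully_faithful_cancel[OF ff F, of "Cmp C (\<eta> (Cod C f)) (KM (FM F f))" "Cmp C f (\<eta> (Dom C f))"]
        a b Ff f cats K0 unfolding K_def by simp
  qed
qed

end

lemma ff_ess_surj_equivalence: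
  assumes F: "is_functor C D F" and ff: "fully_faithful C D F" and es: "ess_surj C D F"
  shows "is_equivalence C D F"
proof -
  have "\<forall>Y\<in>Ob D. \<exists>p. fst p \<in> Ob C \<and> snd p \<in> Arr D \<and> Dom D (snd p) = FO F (fst p) \<and> Cod D (snd p) = Y \<and> is_iso D (snd p)"
    using es unfolding ess_surj_def by fastforce
  then obtain ch where ch: "\<And>Y. Y \<in> Ob D \<Longrightarrow> fst (ch Y) \<in> Ob C \<and> snd (ch Y) \<in> Arr D \<and>
      Dom D (snd (ch Y)) = FO F (fst (ch Y)) \<and> Cod D (snd (ch Y)) = Y \<and> is_iso D (snd (ch Y))"
    by metis
  interpret ff_quasi_inverse C D F "fst \<circ> ch" "snd \<circ> ch"
    using F ff ch by unfold_locales auto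
  show ?thesis
    unfolding is_equivalence_def using F K_functor unit_nat_iso counit_nat_iso by blast
qed

lemma fully_faithful_comp: assumes G: "is_functor C D G" and F: "is_functor D E F" and g: "fully_faithful C D G" and f: "fully_faithful D E F"
  shows "fully_faithful C E (fcomp F G)"
  unfolding fully_faithful_def
proof (intro ballI allI impI)
  fix A B h assume A: "A \<in> Ob C" and B: "B \<in> Ob C" and h: "h \<in> Arr E \<and> Dom E h = FO (fcomp F G) A \<and> Cod E h = FO (fcomp F G) B"
  obtain k where k: "k \<in> Arr D" "Dom D k = FO G A" "Cod D k = FO G B" "FM F k = h"
    using fully_faithfulD[OF f, of "FO G A" "FO G B" h] A B G h by auto
  obtain l where l: "l \<in> Arr C" "Dom C l = A" "Cod C l = B" "FM G l = k"
    using fully_faithfulD[OF g A B, of k] k by auto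
  show "\<exists>!f. f \<in> Arr C \<and> Dom C f = A \<and> Cod C f = B \<and> FM (fcomp F G) f = h"
  proof
    show "l \<in> Arr C \<and> Dom C l = A \<and> Cod C l = B \<and> FM (fcomp F G) l = h" using l k by simp
    fix l' assume l': "l' \<in> Arr C \<and> Dom C l' = A \<and> Cod C l' = B \<and> FM (fcomp F G) l' = h"
    have "FM G l' = FM G l"
      using fully_faithful_cancel[OF f F, of "FM G l'" "FM G l"] l l' G k by simp
    then show "l' = l" using fully_faithful_cancel[OF g G, of l' l] l l' by simp
  qed
qed

lemma ess_surj_comp: assumes G: "is_functor C D G" and F: "is_functor D E F" and g: "ess_surj C D G" and f: "ess_surj D E F"
  shows "ess_surj C E (fcomp F G)"
  unfolding ess_surj_def
proof
  fix Y assume Y: "Y \<in> Ob E"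
  obtain B i where B: "B \<in> Ob D" and i: "i \<in> Arr E" "Dom E i = FO F B" "Cod E i = Y" "is_iso E i"
    using f Y unfolding ess_surj_def by blast
  obtain A j where A: "A \<in> Ob C" and j: "j \<in> Arr D" "Dom D j = FO G A" "Cod D j = B" "is_iso D j"
    using g B unfolding ess_surj_def by blast
  have e: "category E" using F by (rule functor_cod_cat)
  show "\<exists>A\<in>Ob C. \<exists>i. i \<in> Arr E \<and> Dom E i = FO (fcomp F G) A \<and> Cod E i = Y \<and> is_iso E i"
    using A i j F e by (intro bexI[OF _ A] exI[where x="Cmp E i (FM F j)"]) simp
qed

section \<open>Monoidal categories and monoidal functors\<close>

lemma moncat_cat: "monoidal_category C \<Longrightarrow> category C"
  unfolding monoidal_category_def by blast
lemma mf_functor: "is_monoidal_functor C D F \<Longrightarrow> is_functor C D F"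
  unfolding is_monoidal_functor_def by blast
lemma meq_mf: "is_monoidal_equivalence C D F \<Longrightarrow> is_monoidal_functor C D F"
  unfolding is_monoidal_equivalence_def by blast
lemma mnt_nt: "is_monoidal_nat_trans C D F G \<eta> \<Longrightarrow> is_nat_trans C D F G \<eta>"
  unfolding is_monoidal_nat_trans_def by blast
lemma mni_ni: "is_monoidal_nat_iso C D F G \<eta> \<Longrightarrow> is_nat_iso C D F G \<eta>"
  unfolding is_monoidal_nat_iso_def is_nat_iso_def using mnt_nt by blast

context fixes C :: "('o,'m,'z) moncat_scheme" assumes mc: "monoidal_category C"
begin
lemma mc_cat[simp]: "category C" using mc by (rule moncat_cat)
lemma mc_Unt[simp]: "Unt C \<in> Ob C" using mc unfolding monoidal_category_def by (elim conjE) assumption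
lemma mc_Tns[simp]: "A \<in> Ob C \<Longrightarrow> B \<in> Ob C \<Longrightarrow> Tns C A B \<in> Ob C"
  using mc unfolding monoidal_category_def by (elim conjE) blast
lemma mc_TnsA_hom: "f \<in> Arr C \<Longrightarrow> g \<in> Arr C \<Longrightarrow> TnsA C f g \<in> Defs.hom C (Tns C (Dom C f) (Dom C g)) (Tns C (Cod C f) (Cod C g))"
  using mc unfolding monoidal_category_def by (elim conjE) blast
lemma mc_TnsA[simp]: "f \<in> Arr C \<Longrightarrow> g \<in> Arr C \<Longrightarrow> TnsA C f g \<in> Arr C"
  using mc_TnsA_hom by (simp add: hom_def)
lemma mc_TnsA_Dom[simp]: "f \<in> Arr C \<Longrightarrow> g \<in> Arr C \<Longrightarrow> Dom C (TnsA C f g) = Tns C (Dom C f) (Dom C g)"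
  using mc_TnsA_hom by (simp add: hom_def)
lemma mc_TnsA_Cod[simp]: "f \<in> Arr C \<Longrightarrow> g \<in> Arr C \<Longrightarrow> Cod C (TnsA C f g) = Tns C (Cod C f) (Cod C g)"
  using mc_TnsA_hom by (simp add: hom_def)
lemma mc_TnsA_Idt[simp]: "A \<in> Ob C \<Longrightarrow> B \<in> Ob C \<Longrightarrow> TnsA C (Idt C A) (Idt C B) = Idt C (Tns C A B)"
  using mc unfolding monoidal_category_def by (elim conjE) blast
lemma mc_interchange: "f \<in> Arr C \<Longrightarrow> g \<in> Arr C \<Longrightarrow> f' \<in> Arr C \<Longrightarrow> g' \<in> Arr C \<Longrightarrow>
        Cod C f = Dom C g \<Longrightarrow> Cod C f' = Dom C g' \<Longrightarrow>
        TnsA C (Cmp C g f) (Cmp C g' f') = Cmp C (TnsA C g g') (TnsA C f f')"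
  using mc unfolding monoidal_category_def by (elim conjE) blast
lemma mc_Asc_hom: "A \<in> Ob C \<Longrightarrow> B \<in> Ob C \<Longrightarrow> E \<in> Ob C \<Longrightarrow>
        Asc C A B E \<in> Defs.hom C (Tns C (Tns C A B) E) (Tns C A (Tns C B E)) \<and> is_iso C (Asc C A B E)"
  using mc unfolding monoidal_category_def by (elim conjE) blast
lemma mc_LU_hom: "A \<in> Ob C \<Longrightarrow> LU C A \<in> Defs.hom C (Tns C (Unt C) A) A \<and> is_iso C (LU C A)"
  using mc unfolding monoidal_category_def by (elim conjE) blast
lemma mc_RU_hom: "A \<in> Ob C \<Longrightarrow> RU C A \<in> Defs.hom C (Tns C A (Unt C)) A \<and> is_iso C (RU C A)"
  using mc unfolding monoidal_category_def by (elim conjE) blast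
lemma mc_Asc[simp]: "A \<in> Ob C \<Longrightarrow> B \<in> Ob C \<Longrightarrow> E \<in> Ob C \<Longrightarrow> Asc C A B E \<in> Arr C"
  "A \<in> Ob C \<Longrightarrow> B \<in> Ob C \<Longrightarrow> E \<in> Ob C \<Longrightarrow> Dom C (Asc C A B E) = Tns C (Tns C A B) E"
  "A \<in> Ob C \<Longrightarrow> B \<in> Ob C \<Longrightarrow> E \<in> Ob C \<Longrightarrow> Cod C (Asc C A B E) = Tns C A (Tns C B E)"
  "A \<in> Ob C \<Longrightarrow> B \<in> Ob C \<Longrightarrow> E \<in> Ob C \<Longrightarrow> is_iso C (Asc C A B E)"
  using mc_Asc_hom by (simp_all add: hom_def)
lemma mc_LU[simp]: "A \<in> Ob C \<Longrightarrow> LU C A \<in> Arr C" "A \<in> Ob C \<Longrightarrow> Dom C (LU C A) = Tns C (Unt C) A"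
  "A \<in> Ob C \<Longrightarrow> Cod C (LU C A) = A" "A \<in> Ob C \<Longrightarrow> is_iso C (LU C A)"
  using mc_LU_hom by (simp_all add: hom_def)
lemma mc_RU[simp]: "A \<in> Ob C \<Longrightarrow> RU C A \<in> Arr C" "A \<in> Ob C \<Longrightarrow> Dom C (RU C A) = Tns C A (Unt C)"
  "A \<in> Ob C \<Longrightarrow> Cod C (RU C A) = A" "A \<in> Ob C \<Longrightarrow> is_iso C (RU C A)"
  using mc_RU_hom by (simp_all add: hom_def)

lemma mc_TnsA_iso[simp]: "is_iso C f \<Longrightarrow> is_iso C g \<Longrightarrow> is_iso C (TnsA C f g)"
  by (rule iso_intro[where g="TnsA C (inv_arr C f) (inv_arr C g)"]) (simp_all add: mc_interchange[symmetric])
lemma mc_TnsA_inv: "is_iso C f \<Longrightarrow> is_iso C g \<Longrightarrow> inv_arr C (TnsA C f g) = TnsA C (inv_arr C f) (inv_arr C g)"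
  by (rule inv_unique) (simp_all add: mc_interchange[symmetric])
end

context fixes C :: "('o,'m,'z) moncat_scheme" and D :: "('p,'n,'y) moncat_scheme"
   and F :: "('o,'m,'p,'n,'w) monfnctr_scheme"
  assumes mf: "is_monoidal_functor C D F"
begin
lemma mf_mc1[simp]: "monoidal_category C" using mf unfolding is_monoidal_functor_def by (elim conjE)
lemma mf_mc2[simp]: "monoidal_category D" using mf unfolding is_monoidal_functor_def by (elim conjE)
lemma mf_fun[simp]: "is_functor C D F" using mf by (rule mf_functor)
lemma mf_FT_hom: "A \<in> Ob C \<Longrightarrow> B \<in> Ob C \<Longrightarrow> FT F A B \<in> Defs.hom D (FO F (Tns C A B)) (Tns D (FO F A) (FO F B)) \<and> is_iso D (FT F A B)"
  using mf unfolding is_monoidal_functor_def by (elim conjE) blast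
lemma mf_FT[simp]: "A \<in> Ob C \<Longrightarrow> B \<in> Ob C \<Longrightarrow> FT F A B \<in> Arr D"
  "A \<in> Ob C \<Longrightarrow> B \<in> Ob C \<Longrightarrow> Dom D (FT F A B) = FO F (Tns C A B)"
  "A \<in> Ob C \<Longrightarrow> B \<in> Ob C \<Longrightarrow> Cod D (FT F A B) = Tns D (FO F A) (FO F B)"
  "A \<in> Ob C \<Longrightarrow> B \<in> Ob C \<Longrightarrow> is_iso D (FT F A B)"
  using mf_FT_hom by (simp_all add: hom_def)
lemma mf_FU_hom: "FU F \<in> Defs.hom D (FO F (Unt C)) (Unt D) \<and> is_iso D (FU F)"
  using mf unfolding is_monoidal_functor_def by (elim conjE) blast
lemma mf_FU[simp]: "FU F \<in> Arr D" "Dom D (FU F) = FO F (Unt C)" "Cod D (FU F) = Unt D" "is_iso D (FU F)"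
  using mf_FU_hom by (simp_all add: hom_def)
lemma mf_FT_nat: "f \<in> Arr C \<Longrightarrow> g \<in> Arr C \<Longrightarrow>
        Cmp D (FT F (Cod C f) (Cod C g)) (FM F (TnsA C f g)) =
        Cmp D (TnsA D (FM F f) (FM F g)) (FT F (Dom C f) (Dom C g))"
  using mf unfolding is_monoidal_functor_def by (elim conjE) blast
lemma mf_hex: "A \<in> Ob C \<Longrightarrow> B \<in> Ob C \<Longrightarrow> E \<in> Ob C \<Longrightarrow>
        Cmp D (Asc D (FO F A) (FO F B) (FO F E))
          (Cmp D (TnsA D (FT F A B) (Idt D (FO F E))) (FT F (Tns C A B) E)) =
        Cmp D (TnsA D (Idt D (FO F A)) (FT F B E))
          (Cmp D (FT F A (Tns C B E)) (FM F (Asc C A B E)))"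
  using mf unfolding is_monoidal_functor_def by (elim conjE) blast
lemma mf_lu: "A \<in> Ob C \<Longrightarrow> Cmp D (LU D (FO F A)) (Cmp D (TnsA D (FU F) (Idt D (FO F A))) (FT F (Unt C) A))
        = FM F (LU C A)"
  using mf unfolding is_monoidal_functor_def by (elim conjE) blast
lemma mf_ru: "A \<in> Ob C \<Longrightarrow> Cmp D (RU D (FO F A)) (Cmp D (TnsA D (Idt D (FO F A)) (FU F)) (FT F A (Unt C)))
        = FM F (RU C A)"
  using mf unfolding is_monoidal_functor_def by (elim conjE) blast
end

lemmas mc_simps = mc_cat mc_Unt mc_Tns mc_TnsA mc_TnsA_Dom mc_TnsA_Cod mc_TnsA_Idt mc_Asc mc_LU mc_RU mc_TnsA_iso

lemma mc_TnsA_Cmp_Idt: "monoidal_category C \<Longrightarrow> f \<in> Arr C \<Longrightarrow> g \<in> Arr C \<Longrightarrow> Cod C f = Dom C g \<Longrightarrow> X \<in> Ob C \<Longrightarrow>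
   TnsA C (Cmp C g f) (Idt C X) = Cmp C (TnsA C g (Idt C X)) (TnsA C f (Idt C X))"
  using mc_interchange[of C f g "Idt C X" "Idt C X"] by simp
lemma mc_Idt_TnsA_Cmp: "monoidal_category C \<Longrightarrow> f \<in> Arr C \<Longrightarrow> g \<in> Arr C \<Longrightarrow> Cod C f = Dom C g \<Longrightarrow> X \<in> Ob C \<Longrightarrow>
   TnsA C (Idt C X) (Cmp C g f) = Cmp C (TnsA C (Idt C X) g) (TnsA C (Idt C X) f)"
  using mc_interchange[of C "Idt C X" "Idt C X" f g] by simp

lemma mfcomp_FO[simp]: "FO (mfcomp E F G) = FO F \<circ> FO G" by (simp add: mfcomp_def)
lemma mfcomp_FM[simp]: "FM (mfcomp E F G) = FM F \<circ> FM G" by (simp add: mfcomp_def)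
lemma mfcomp_FT[simp]: "FT (mfcomp E F G) = (\<lambda>A B. Cmp E (FT F (FO G A) (FO G B)) (FM F (FT G A B)))" by (simp add: mfcomp_def)
lemma mfcomp_FU[simp]: "FU (mfcomp E F G) = Cmp E (FU F) (FM F (FU G))" by (simp add: mfcomp_def)
lemma mfid_FO[simp]: "FO (mfid C) = id" by (simp add: mfid_def)
lemma mfid_FM[simp]: "FM (mfid C) = id" by (simp add: mfid_def)
lemma mfid_FT[simp]: "FT (mfid C) = (\<lambda>A B. Idt C (Tns C A B))" by (simp add: mfid_def)
lemma mfid_FU[simp]: "FU (mfid C) = Idt C (Unt C)" by (simp add: mfid_def)

lemma functor_mfcomp: "is_functor C D G \<Longrightarrow> is_functor D E F \<Longrightarrow> is_functor C E (mfcomp E F G)"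
  using functor_fcomp[of C D G E F] is_functor_cong[of "mfcomp E F G" "fcomp F G" C E] by simp

context
  fixes C :: "('o,'m,'z) moncat_scheme" and D :: "('p,'n,'y) moncat_scheme" and E :: "('q,'k,'x) moncat_scheme"
    and G :: "('o,'m,'p,'n,'w) monfnctr_scheme" and F :: "('p,'n,'q,'k,'v) monfnctr_scheme"
  assumes mG: "is_monoidal_functor C D G" and mF: "is_monoidal_functor D E F"
begin

private lemmas mfcomp_simps[simp] = mc_simps[OF mf_mc1[OF mG]] mc_simps[OF mf_mc2[OF mG]] mc_simps[OF mf_mc2[OF mF]]
  functor_simps[OF mf_fun[OF mG]] functor_simps[OF mf_fun[OF mF]]
  mf_FT[OF mG] mf_FU[OF mG] mf_FT[OF mF] mf_FU[OF mF]

private lemmas mfcomp_normalize = cat_assoc functor_Cmp[OF mf_fun[OF mG]] functor_Cmp[OF mf_fun[OF mF]]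
  mc_interchange[OF mf_mc1[OF mG]] mc_interchange[OF mf_mc2[OF mG]] mc_interchange[OF mf_mc2[OF mF]]
  mc_TnsA_Cmp_Idt[OF mf_mc2[OF mG]] mc_Idt_TnsA_Cmp[OF mf_mc2[OF mG]] mc_TnsA_Cmp_Idt[OF mf_mc2[OF mF]] mc_Idt_TnsA_Cmp[OF mf_mc2[OF mF]]

lemma mfcomp_FT_natural:
  assumes f: "f \<in> Arr C" and g: "g \<in> Arr C"
  shows "Cmp E (FT (mfcomp E F G) (Cod C f) (Cod C g)) (FM (mfcomp E F G) (TnsA C f g)) =
    Cmp E (TnsA E (FM (mfcomp E F G) f) (FM (mfcomp E F G) g)) (FT (mfcomp E F G) (Dom C f) (Dom C g))"
proof -
  have cE: "category E" using mF by simp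
  have n1: "Cmp D (FT G (Cod C f) (Cod C g)) (FM G (TnsA C f g)) = Cmp D (TnsA D (FM G f) (FM G g)) (FT G (Dom C f) (Dom C g))"
    using mf_FT_nat[OF mG f g] .
  have n2: "Cmp E (FT F (FO G (Cod C f)) (FO G (Cod C g))) (FM F (TnsA D (FM G f) (FM G g))) =
            Cmp E (TnsA E (FM F (FM G f)) (FM F (FM G g))) (FT F (FO G (Dom C f)) (FO G (Dom C g)))"
    using mf_FT_nat[OF mF, of "FM G f" "FM G g"] f g by simp
  have n1': "Cmp E (FM F (FT G (Cod C f) (Cod C g))) (FM F (FM G (TnsA C f g))) = Cmp E (FM F (TnsA D (FM G f) (FM G g))) (FM F (FT G (Dom C f) (Dom C g)))"
    using arg_cong[OF n1, of "FM F"] f g by (simp add: mfcomp_normalize)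
  show ?thesis
    using f g n2 by (simp add: mfcomp_normalize cat_eq_extend[OF cE n1'] n1' cat_eq_extend[OF cE n2] n2)
qed

lemma mfcomp_hexagon:
  assumes A: "A \<in> Ob C" and B: "B \<in> Ob C" and K: "K \<in> Ob C"
  shows "Cmp E (Asc E (FO (mfcomp E F G) A) (FO (mfcomp E F G) B) (FO (mfcomp E F G) K))
      (Cmp E (TnsA E (FT (mfcomp E F G) A B) (Idt E (FO (mfcomp E F G) K))) (FT (mfcomp E F G) (Tns C A B) K)) =
    Cmp E (TnsA E (Idt E (FO (mfcomp E F G) A)) (FT (mfcomp E F G) B K)) (Cmp E (FT (mfcomp E F G) A (Tns C B K)) (FM (mfcomp E F G) (Asc C A B K)))"
proof -
  have cE: "category E" using mF by simp
  have hG: "Cmp D (Asc D (FO G A) (FO G B) (FO G K)) (Cmp D (TnsA D (FT G A B) (Idt D (FO G K))) (FT G (Tns C A B) K)) =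
      Cmp D (TnsA D (Idt D (FO G A)) (FT G B K)) (Cmp D (FT G A (Tns C B K)) (FM G (Asc C A B K)))"
    using mf_hex[OF mG A B K] .
  have hF: "Cmp E (Asc E (FO F (FO G A)) (FO F (FO G B)) (FO F (FO G K))) (Cmp E (TnsA E (FT F (FO G A) (FO G B)) (Idt E (FO F (FO G K)))) (FT F (Tns D (FO G A) (FO G B)) (FO G K))) =
      Cmp E (TnsA E (Idt E (FO F (FO G A))) (FT F (FO G B) (FO G K))) (Cmp E (FT F (FO G A) (Tns D (FO G B) (FO G K))) (FM F (Asc D (FO G A) (FO G B) (FO G K))))"
    using mf_hex[OF mF, of "FO G A" "FO G B" "FO G K"] A B K by simp
  have hG': "Cmp E (FM F (Asc D (FO G A) (FO G B) (FO G K))) (Cmp E (FM F (TnsA D (FT G A B) (Idt D (FO G K)))) (FM F (FT G (Tns C A B) K))) =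
      Cmp E (FM F (TnsA D (Idt D (FO G A)) (FT G B K))) (Cmp E (FM F (FT G A (Tns C B K))) (FM F (FM G (Asc C A B K))))"
    using arg_cong[OF hG, of "FM F"] A B K by (simp add: mfcomp_normalize)
  have nA: "Cmp E (FT F (Tns D (FO G A) (FO G B)) (FO G K)) (FM F (TnsA D (FT G A B) (Idt D (FO G K)))) =
     Cmp E (TnsA E (FM F (FT G A B)) (Idt E (FO F (FO G K)))) (FT F (FO G (Tns C A B)) (FO G K))"
    using mf_FT_nat[OF mF, of "FT G A B" "Idt D (FO G K)"] A B K by simp
  have nB: "Cmp E (FT F (FO G A) (Tns D (FO G B) (FO G K))) (FM F (TnsA D (Idt D (FO G A)) (FT G B K))) =
     Cmp E (TnsA E (Idt E (FO F (FO G A))) (FM F (FT G B K))) (FT F (FO G A) (FO G (Tns C B K)))"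
    using mf_FT_nat[OF mF, of "Idt D (FO G A)" "FT G B K"] A B K by simp
  have "Cmp E (Asc E (FO (mfcomp E F G) A) (FO (mfcomp E F G) B) (FO (mfcomp E F G) K)) (Cmp E (TnsA E (FT (mfcomp E F G) A B) (Idt E (FO (mfcomp E F G) K))) (FT (mfcomp E F G) (Tns C A B) K))
    = Cmp E (Asc E (FO F (FO G A)) (FO F (FO G B)) (FO F (FO G K))) (Cmp E (TnsA E (FT F (FO G A) (FO G B)) (Idt E (FO F (FO G K))))
        (Cmp E (FT F (Tns D (FO G A) (FO G B)) (FO G K)) (Cmp E (FM F (TnsA D (FT G A B) (Idt D (FO G K)))) (FM F (FT G (Tns C A B) K)))))"
    using A B K by (simp add: mfcomp_normalize cat_eq_extend[OF cE nA[symmetric]] nA[symmetric])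
  also have "\<dots> = Cmp E (TnsA E (Idt E (FO F (FO G A))) (FT F (FO G B) (FO G K))) (Cmp E (FT F (FO G A) (Tns D (FO G B) (FO G K)))
        (Cmp E (FM F (Asc D (FO G A) (FO G B) (FO G K))) (Cmp E (FM F (TnsA D (FT G A B) (Idt D (FO G K)))) (FM F (FT G (Tns C A B) K)))))"
    using A B K by (simp add: cat_assoc[symmetric] hF)
  also have "\<dots> = Cmp E (TnsA E (Idt E (FO F (FO G A))) (FT F (FO G B) (FO G K))) (Cmp E (FT F (FO G A) (Tns D (FO G B) (FO G K)))
        (Cmp E (FM F (TnsA D (Idt D (FO G A)) (FT G B K))) (Cmp E (FM F (FT G A (Tns C B K))) (FM F (FM G (Asc C A B K))))))"
    using A B K by (simp only: hG')
  also have "\<dots> = Cmp E (TnsA E (Idt E (FO (mfcomp E F G) A)) (FT (mfcomp E F G) B K)) (Cmp E (FT (mfcomp E F G) A (Tns C B K)) (FM (mfcomp E F G) (Asc C A B K)))"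
    using A B K by (simp add: mfcomp_normalize cat_eq_extend[OF cE nB] nB)
  finally show ?thesis .
qed

lemma mfcomp_left_unit:
  assumes A: "A \<in> Ob C"
  shows "Cmp E (LU E (FO (mfcomp E F G) A)) (Cmp E (TnsA E (FU (mfcomp E F G)) (Idt E (FO (mfcomp E F G) A))) (FT (mfcomp E F G) (Unt C) A)) = FM (mfcomp E F G) (LU C A)"
proof -
  have cE: "category E" using mF by simp
  have lG: "Cmp D (LU D (FO G A)) (Cmp D (TnsA D (FU G) (Idt D (FO G A))) (FT G (Unt C) A)) = FM G (LU C A)"
    using mf_lu[OF mG A] .
  have lF: "Cmp E (LU E (FO F (FO G A))) (Cmp E (TnsA E (FU F) (Idt E (FO F (FO G A)))) (FT F (Unt D) (FO G A))) = FM F (LU D (FO G A))"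
    using mf_lu[OF mF, of "FO G A"] A by simp
  have lG': "Cmp E (FM F (LU D (FO G A))) (Cmp E (FM F (TnsA D (FU G) (Idt D (FO G A)))) (FM F (FT G (Unt C) A))) = FM F (FM G (LU C A))"
    using arg_cong[OF lG, of "FM F"] A by (simp add: mfcomp_normalize)
  have n: "Cmp E (FT F (Unt D) (FO G A)) (FM F (TnsA D (FU G) (Idt D (FO G A)))) =
     Cmp E (TnsA E (FM F (FU G)) (Idt E (FO F (FO G A)))) (FT F (FO G (Unt C)) (FO G A))"
    using mf_FT_nat[OF mF, of "FU G" "Idt D (FO G A)"] A by simp
  have "Cmp E (LU E (FO (mfcomp E F G) A)) (Cmp E (TnsA E (FU (mfcomp E F G)) (Idt E (FO (mfcomp E F G) A))) (FT (mfcomp E F G) (Unt C) A))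
     = Cmp E (LU E (FO F (FO G A))) (Cmp E (TnsA E (FU F) (Idt E (FO F (FO G A)))) (Cmp E (FT F (Unt D) (FO G A))
         (Cmp E (FM F (TnsA D (FU G) (Idt D (FO G A)))) (FM F (FT G (Unt C) A)))))"
    using A by (simp add: mfcomp_normalize cat_eq_extend[OF cE n[symmetric]] n[symmetric])
  also have "\<dots> = Cmp E (FM F (LU D (FO G A))) (Cmp E (FM F (TnsA D (FU G) (Idt D (FO G A)))) (FM F (FT G (Unt C) A)))"
    using A by (simp add: cat_assoc[symmetric] lF)
  also have "\<dots> = FM (mfcomp E F G) (LU C A)" using lG' by simp
  finally show ?thesis .
qed

lemma mfcomp_right_unit:
  assumes A: "A \<in> Ob C"
  shows "Cmp E (RU E (FO (mfcomp E F G) A)) (Cmp E (TnsA E (Idt E (FO (mfcomp E F G) A)) (FU (mfcomp E F G))) (FT (mfcomp E F G) A (Unt C))) = FM (mfcomp E F G) (RU C A)"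
proof -
  have cE: "category E" using mF by simp
  have lG: "Cmp D (RU D (FO G A)) (Cmp D (TnsA D (Idt D (FO G A)) (FU G)) (FT G A (Unt C))) = FM G (RU C A)"
    using mf_ru[OF mG A] .
  have lF: "Cmp E (RU E (FO F (FO G A))) (Cmp E (TnsA E (Idt E (FO F (FO G A))) (FU F)) (FT F (FO G A) (Unt D))) = FM F (RU D (FO G A))"
    using mf_ru[OF mF, of "FO G A"] A by simp
  have lG': "Cmp E (FM F (RU D (FO G A))) (Cmp E (FM F (TnsA D (Idt D (FO G A)) (FU G))) (FM F (FT G A (Unt C)))) = FM F (FM G (RU C A))"
    using arg_cong[OF lG, of "FM F"] A by (simp add: mfcomp_normalize)
  have n: "Cmp E (FT F (FO G A) (Unt D)) (FM F (TnsA D (Idt D (FO G A)) (FU G))) =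
     Cmp E (TnsA E (Idt E (FO F (FO G A))) (FM F (FU G))) (FT F (FO G A) (FO G (Unt C)))"
    using mf_FT_nat[OF mF, of "Idt D (FO G A)" "FU G"] A by simp
  have "Cmp E (RU E (FO (mfcomp E F G) A)) (Cmp E (TnsA E (Idt E (FO (mfcomp E F G) A)) (FU (mfcomp E F G))) (FT (mfcomp E F G) A (Unt C)))
     = Cmp E (RU E (FO F (FO G A))) (Cmp E (TnsA E (Idt E (FO F (FO G A))) (FU F)) (Cmp E (FT F (FO G A) (Unt D))
         (Cmp E (FM F (TnsA D (Idt D (FO G A)) (FU G))) (FM F (FT G A (Unt C))))))"
    using A by (simp add: mfcomp_normalize cat_eq_extend[OF cE n[symmetric]] n[symmetric])
  also have "\<dots> = Cmp E (FM F (RU D (FO G A))) (Cmp E (FM F (TnsA D (Idt D (FO G A)) (FU G))) (FM F (FT G A (Unt C))))"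
    using A by (simp add: cat_assoc[symmetric] lF)
  also have "\<dots> = FM (mfcomp E F G) (RU C A)" using lG' by simp
  finally show ?thesis .
qed

lemma monoidal_functor_mfcomp: "is_monoidal_functor C E (mfcomp E F G)"
  unfolding is_monoidal_functor_def
  using mfcomp_FT_natural mfcomp_hexagon mfcomp_left_unit mfcomp_right_unit
    functor_mfcomp[OF mf_fun[OF mG] mf_fun[OF mF]] mG mF
  by (simp add: hom_def)

end

lemma monoidal_functor_mfid:
  assumes mc: "monoidal_category C"
  shows "is_monoidal_functor C C (mfid C)"
  using mc functor_fid[OF mc_cat[OF mc]] is_functor_cong[of "mfid C" fid C C]
  unfolding is_monoidal_functor_def by (simp add: mc_simps[OF mc] hom_def)

lemma fully_faithful_cong: "FO F1 = FO F2 \<Longrightarrow> FM F1 = FM F2 \<Longrightarrow> fully_faithful C D F1 = fully_faithful C D F2"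
  unfolding fully_faithful_def by simp
lemma ess_surj_cong: "FO F1 = FO F2 \<Longrightarrow> FM F1 = FM F2 \<Longrightarrow> ess_surj C D F1 = ess_surj C D F2"
  unfolding ess_surj_def by simp

lemma equivalence_mfcomp:
  assumes G: "is_equivalence C D G" and F: "is_equivalence D E F"
  shows "is_equivalence C E (mfcomp E F G)"
proof -
  have Gf: "is_functor C D G" and Ff: "is_functor D E F" using G F unfolding is_equivalence_def by blast+
  have "fully_faithful C E (fcomp F G)" using fully_faithful_comp[OF Gf Ff equivalence_fully_faithful[OF G] equivalence_fully_faithful[OF F]] .
  moreover have "fully_faithful C E (mfcomp E F G) = fully_faithful C E (fcomp F G)" by (rule fully_faithful_cong) simp_all
  ultimately have ff: "fully_faithful C E (mfcomp E F G)" by simp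
  have "ess_surj C E (fcomp F G)" using ess_surj_comp[OF Gf Ff equivalence_ess_surj[OF G] equivalence_ess_surj[OF F]] .
  moreover have "ess_surj C E (mfcomp E F G) = ess_surj C E (fcomp F G)" by (rule ess_surj_cong) simp_all
  ultimately have es: "ess_surj C E (mfcomp E F G)" by simp
  show ?thesis using ff_ess_surj_equivalence[OF functor_mfcomp[OF Gf Ff] ff es] .
qed

lemma equivalence_mfid:
  assumes c: "category C"
  shows "is_equivalence C C (mfid C)"
proof -
  have f: "is_functor C C (mfid C)" using functor_fid[OF c] is_functor_cong[of "mfid C" fid C C] by simp
  have ff: "fully_faithful C C (mfid C)" unfolding fully_faithful_def using c by auto
  have es: "ess_surj C C (mfid C)" unfolding ess_surj_def
  proof
    fix Y assume "Y \<in> Ob C"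
    then show "\<exists>A\<in>Ob C. \<exists>i. i \<in> Arr C \<and> Dom C i = FO (mfid C) A \<and> Cod C i = Y \<and> is_iso C i"
      using c by (intro bexI[of _ Y] exI[of _ "Idt C Y"]) auto
  qed
  show ?thesis using ff_ess_surj_equivalence[OF f ff es] .
qed

context fixes C :: "('o,'m,'z) moncat_scheme" and D :: "('p,'n,'y) moncat_scheme"
   and F :: "('o,'m,'p,'n,'w) monfnctr_scheme" and G :: "('o,'m,'p,'n,'v) monfnctr_scheme" and \<eta>
  assumes mnt: "is_monoidal_nat_trans C D F G \<eta>"
begin
lemma mnt_mf1: "is_monoidal_functor C D F" using mnt unfolding is_monoidal_nat_trans_def by (elim conjE)
lemma mnt_mf2: "is_monoidal_functor C D G" using mnt unfolding is_monoidal_nat_trans_def by (elim conjE)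
lemma mnt_nt': "is_nat_trans C D F G \<eta>" using mnt by (rule mnt_nt)
lemma mnt_FT: "A \<in> Ob C \<Longrightarrow> B \<in> Ob C \<Longrightarrow>
        Cmp D (FT G A B) (\<eta> (Tns C A B)) = Cmp D (TnsA D (\<eta> A) (\<eta> B)) (FT F A B)"
  using mnt unfolding is_monoidal_nat_trans_def by (elim conjE) blast
lemma mnt_FU: "Cmp D (FU G) (\<eta> (Unt C)) = FU F"
  using mnt unfolding is_monoidal_nat_trans_def by (elim conjE)
end

lemma mnt_intro:
  assumes "is_monoidal_functor C D F" "is_monoidal_functor C D G" "is_nat_trans C D F G \<eta>"
   "\<And>A B. A \<in> Ob C \<Longrightarrow> B \<in> Ob C \<Longrightarrow> Cmp D (FT G A B) (\<eta> (Tns C A B)) = Cmp D (TnsA D (\<eta> A) (\<eta> B)) (FT F A B)"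
   "Cmp D (FU G) (\<eta> (Unt C)) = FU F"
  shows "is_monoidal_nat_trans C D F G \<eta>"
  unfolding is_monoidal_nat_trans_def using assms by blast

lemma mni_intro: "is_monoidal_nat_trans C D F G \<eta> \<Longrightarrow> (\<And>A. A \<in> Ob C \<Longrightarrow> is_iso D (\<eta> A)) \<Longrightarrow> is_monoidal_nat_iso C D F G \<eta>"
  unfolding is_monoidal_nat_iso_def by blast
lemma mni_mnt: "is_monoidal_nat_iso C D F G \<eta> \<Longrightarrow> is_monoidal_nat_trans C D F G \<eta>"
  unfolding is_monoidal_nat_iso_def by blast
lemma mni_iso: "is_monoidal_nat_iso C D F G \<eta> \<Longrightarrow> A \<in> Ob C \<Longrightarrow> is_iso D (\<eta> A)"
  unfolding is_monoidal_nat_iso_def by blast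

lemma mnt_vcomp:
  assumes e1: "is_monoidal_nat_trans C D F G \<eta>" and e2: "is_monoidal_nat_trans C D G K \<epsilon>"
  shows "is_monoidal_nat_trans C D F K (\<lambda>A. Cmp D (\<epsilon> A) (\<eta> A))"
proof -
  note mF = mnt_mf1[OF e1] and mG = mnt_mf2[OF e1] and mK = mnt_mf2[OF e2]
  note n1 = mnt_nt'[OF e1] and n2 = mnt_nt'[OF e2]
  note mcC = mf_mc1[OF mF] and mcD = mf_mc2[OF mF]
  have cD: "category D" using mcD by simp
  note s[simp] = mc_simps[OF mcC] mc_simps[OF mcD] functor_simps[OF mf_fun[OF mF]] functor_simps[OF mf_fun[OF mG]] functor_simps[OF mf_fun[OF mK]]
    mf_FT[OF mF] mf_FU[OF mF] mf_FT[OF mG] mf_FU[OF mG] mf_FT[OF mK] mf_FU[OF mK] nt_simps[OF n1] nt_simps[OF n2]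
  note nf = cat_assoc mc_interchange[OF mcD]
  show ?thesis
  proof (rule mnt_intro[OF mF mK nt_intro[OF mf_fun[OF mF] mf_fun[OF mK]]])
    fix A assume "A \<in> Ob C" then show "Cmp D (\<epsilon> A) (\<eta> A) \<in> Arr D \<and> Dom D (Cmp D (\<epsilon> A) (\<eta> A)) = FO F A \<and> Cod D (Cmp D (\<epsilon> A) (\<eta> A)) = FO K A"
      by simp
  next
    fix f assume f: "f \<in> Arr C"
    have a: "Cmp D (\<eta> (Cod C f)) (FM F f) = Cmp D (FM G f) (\<eta> (Dom C f))" using nt_nat[OF n1 f] .
    have b: "Cmp D (\<epsilon> (Cod C f)) (FM G f) = Cmp D (FM K f) (\<epsilon> (Dom C f))" using nt_nat[OF n2 f] .
    show "Cmp D (Cmp D (\<epsilon> (Cod C f)) (\<eta> (Cod C f))) (FM F f) = Cmp D (FM K f) (Cmp D (\<epsilon> (Dom C f)) (\<eta> (Dom C f)))"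
      using f by (simp add: nf cat_eq_extend[OF cD a] a cat_eq_extend[OF cD b] b)
  next
    fix A B assume A: "A \<in> Ob C" and B: "B \<in> Ob C"
    have a: "Cmp D (FT G A B) (\<eta> (Tns C A B)) = Cmp D (TnsA D (\<eta> A) (\<eta> B)) (FT F A B)" using mnt_FT[OF e1 A B] .
    have b: "Cmp D (FT K A B) (\<epsilon> (Tns C A B)) = Cmp D (TnsA D (\<epsilon> A) (\<epsilon> B)) (FT G A B)" using mnt_FT[OF e2 A B] .
    show "Cmp D (FT K A B) (Cmp D (\<epsilon> (Tns C A B)) (\<eta> (Tns C A B))) = Cmp D (TnsA D (Cmp D (\<epsilon> A) (\<eta> A)) (Cmp D (\<epsilon> B) (\<eta> B))) (FT F A B)"
      using A B by (simp add: nf cat_eq_extend[OF cD a] a cat_eq_extend[OF cD b] b)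
  next
    have a: "Cmp D (FU G) (\<eta> (Unt C)) = FU F" using mnt_FU[OF e1] .
    have b: "Cmp D (FU K) (\<epsilon> (Unt C)) = FU G" using mnt_FU[OF e2] .
    show "Cmp D (FU K) (Cmp D (\<epsilon> (Unt C)) (\<eta> (Unt C))) = FU F"
      by (simp add: cat_assoc[symmetric] a b)
  qed
qed

lemma mni_vcomp:
  assumes e1: "is_monoidal_nat_iso C D F G \<eta>" and e2: "is_monoidal_nat_iso C D G K \<epsilon>"
  shows "is_monoidal_nat_iso C D F K (\<lambda>A. Cmp D (\<epsilon> A) (\<eta> A))"
proof (rule mni_intro[OF mnt_vcomp[OF mni_mnt[OF e1] mni_mnt[OF e2]]])
  fix A assume A: "A \<in> Ob C"
  note n1 = mnt_nt'[OF mni_mnt[OF e1]] and n2 = mnt_nt'[OF mni_mnt[OF e2]]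
  have "category D" using functor_cod_cat[OF nt_functor1[OF n1]] .
  then show "is_iso D (Cmp D (\<epsilon> A) (\<eta> A))"
    using mni_iso[OF e1 A] mni_iso[OF e2 A] nt_simps[OF n1 A] nt_simps[OF n2 A] by simp
qed

lemma mnt_whiskerL:
  assumes mK: "is_monoidal_functor D E K" and e: "is_monoidal_nat_trans C D F G \<eta>"
  shows "is_monoidal_nat_trans C E (mfcomp E K F) (mfcomp E K G) (\<lambda>A. FM K (\<eta> A))"
proof -
  note mF = mnt_mf1[OF e] and mG = mnt_mf2[OF e]
  note n = mnt_nt'[OF e]
  note mcC = mf_mc1[OF mF] and mcD = mf_mc2[OF mF] and mcE = mf_mc2[OF mK]
  have cE: "category E" using mcE by simp
  note Kf = mf_fun[OF mK]
  note s[simp] = mc_simps[OF mcC] mc_simps[OF mcD] mc_simps[OF mcE] functor_simps[OF mf_fun[OF mF]] functor_simps[OF mf_fun[OF mG]] functor_simps[OF Kf]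
    mf_FT[OF mF] mf_FU[OF mF] mf_FT[OF mG] mf_FU[OF mG] mf_FT[OF mK] mf_FU[OF mK] nt_simps[OF n]
  note nf = cat_assoc mc_interchange[OF mcD] functor_Cmp[OF Kf]
  show ?thesis
  proof (rule mnt_intro[OF monoidal_functor_mfcomp[OF mF mK] monoidal_functor_mfcomp[OF mG mK] nt_intro[OF functor_mfcomp[OF mf_fun[OF mF] Kf] functor_mfcomp[OF mf_fun[OF mG] Kf]]])
    fix A assume "A \<in> Ob C" then show "FM K (\<eta> A) \<in> Arr E \<and> Dom E (FM K (\<eta> A)) = FO (mfcomp E K F) A \<and> Cod E (FM K (\<eta> A)) = FO (mfcomp E K G) A"
      by simp
  next
    fix f assume f: "f \<in> Arr C"
    have a: "Cmp D (\<eta> (Cod C f)) (FM F f) = Cmp D (FM G f) (\<eta> (Dom C f))" using nt_nat[OF n f] .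
    have a': "Cmp E (FM K (\<eta> (Cod C f))) (FM K (FM F f)) = Cmp E (FM K (FM G f)) (FM K (\<eta> (Dom C f)))"
      using arg_cong[OF a, of "FM K"] f by (simp add: nf)
    show "Cmp E (FM K (\<eta> (Cod C f))) (FM (mfcomp E K F) f) = Cmp E (FM (mfcomp E K G) f) (FM K (\<eta> (Dom C f)))"
      using a' by simp
  next
    fix A B assume A: "A \<in> Ob C" and B: "B \<in> Ob C"
    have a: "Cmp D (FT G A B) (\<eta> (Tns C A B)) = Cmp D (TnsA D (\<eta> A) (\<eta> B)) (FT F A B)" using mnt_FT[OF e A B] .
    have a': "Cmp E (FM K (FT G A B)) (FM K (\<eta> (Tns C A B))) = Cmp E (FM K (TnsA D (\<eta> A) (\<eta> B))) (FM K (FT F A B))"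
      using arg_cong[OF a, of "FM K"] A B by (simp add: nf)
    have b: "Cmp E (FT K (FO G A) (FO G B)) (FM K (TnsA D (\<eta> A) (\<eta> B))) = Cmp E (TnsA E (FM K (\<eta> A)) (FM K (\<eta> B))) (FT K (FO F A) (FO F B))"
      using mf_FT_nat[OF mK, of "\<eta> A" "\<eta> B"] A B by simp
    show "Cmp E (FT (mfcomp E K G) A B) (FM K (\<eta> (Tns C A B))) = Cmp E (TnsA E (FM K (\<eta> A)) (FM K (\<eta> B))) (FT (mfcomp E K F) A B)"
      using A B by (simp add: nf cat_eq_extend[OF cE a'] a' cat_eq_extend[OF cE b] b)
  next
    have a: "Cmp D (FU G) (\<eta> (Unt C)) = FU F" using mnt_FU[OF e] .
    have a': "Cmp E (FM K (FU G)) (FM K (\<eta> (Unt C))) = FM K (FU F)"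
      using arg_cong[OF a, of "FM K"] by (simp add: nf)
    show "Cmp E (FU (mfcomp E K G)) (FM K (\<eta> (Unt C))) = FU (mfcomp E K F)"
      by (simp add: cat_assoc a')
  qed
qed

lemma mnt_whiskerR:
  assumes mK: "is_monoidal_functor B C K" and e: "is_monoidal_nat_trans C D F G \<eta>"
  shows "is_monoidal_nat_trans B D (mfcomp D F K) (mfcomp D G K) (\<lambda>A. \<eta> (FO K A))"
proof -
  note mF = mnt_mf1[OF e] and mG = mnt_mf2[OF e]
  note n = mnt_nt'[OF e]
  note mcB = mf_mc1[OF mK] and mcC = mf_mc1[OF mF] and mcD = mf_mc2[OF mF]
  have cD: "category D" using mcD by simp
  note Kf = mf_fun[OF mK]
  note s[simp] = mc_simps[OF mcB] mc_simps[OF mcC] mc_simps[OF mcD] functor_simps[OF mf_fun[OF mF]] functor_simps[OF mf_fun[OF mG]] functor_simps[OF Kf]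
    mf_FT[OF mF] mf_FU[OF mF] mf_FT[OF mG] mf_FU[OF mG] mf_FT[OF mK] mf_FU[OF mK] nt_simps[OF n]
  note nf = cat_assoc mc_interchange[OF mcD]
  show ?thesis
  proof (rule mnt_intro[OF monoidal_functor_mfcomp[OF mK mF] monoidal_functor_mfcomp[OF mK mG] nt_intro[OF functor_mfcomp[OF Kf mf_fun[OF mF]] functor_mfcomp[OF Kf mf_fun[OF mG]]]])
    fix A assume "A \<in> Ob B" then show "\<eta> (FO K A) \<in> Arr D \<and> Dom D (\<eta> (FO K A)) = FO (mfcomp D F K) A \<and> Cod D (\<eta> (FO K A)) = FO (mfcomp D G K) A"
      by simp
  next
    fix f assume f: "f \<in> Arr B"
    have a: "Cmp D (\<eta> (Cod C (FM K f))) (FM F (FM K f)) = Cmp D (FM G (FM K f)) (\<eta> (Dom C (FM K f)))"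
      using nt_nat[OF n, of "FM K f"] f by simp
    show "Cmp D (\<eta> (FO K (Cod B f))) (FM (mfcomp D F K) f) = Cmp D (FM (mfcomp D G K) f) (\<eta> (FO K (Dom B f)))"
      using a f by simp
  next
    fix A B' assume A: "A \<in> Ob B" and B: "B' \<in> Ob B"
    have a: "Cmp D (FT G (FO K A) (FO K B')) (\<eta> (Tns C (FO K A) (FO K B'))) = Cmp D (TnsA D (\<eta> (FO K A)) (\<eta> (FO K B'))) (FT F (FO K A) (FO K B'))"
      using mnt_FT[OF e, of "FO K A" "FO K B'"] A B by simp
    have b0: "Cmp D (\<eta> (Cod C (FT K A B'))) (FM F (FT K A B')) = Cmp D (FM G (FT K A B')) (\<eta> (Dom C (FT K A B')))"
      using nt_nat[OF n, of "FT K A B'"] A B by simp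
    have b: "Cmp D (\<eta> (Tns C (FO K A) (FO K B'))) (FM F (FT K A B')) = Cmp D (FM G (FT K A B')) (\<eta> (FO K (Tns B A B')))"
      using b0 A B by simp
    show "Cmp D (FT (mfcomp D G K) A B') (\<eta> (FO K (Tns B A B'))) = Cmp D (TnsA D (\<eta> (FO K A)) (\<eta> (FO K B'))) (FT (mfcomp D F K) A B')"
      using A B by (simp add: nf cat_eq_extend[OF cD b[symmetric]] b[symmetric] cat_eq_extend[OF cD a] a)
  next
    have a: "Cmp D (FU G) (\<eta> (Unt C)) = FU F" using mnt_FU[OF e] .
    have b0: "Cmp D (\<eta> (Cod C (FU K))) (FM F (FU K)) = Cmp D (FM G (FU K)) (\<eta> (Dom C (FU K)))"
      using nt_nat[OF n, of "FU K"] by simp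
    have b: "Cmp D (\<eta> (Unt C)) (FM F (FU K)) = Cmp D (FM G (FU K)) (\<eta> (FO K (Unt B)))"
      using b0 by simp
    show "Cmp D (FU (mfcomp D G K)) (\<eta> (FO K (Unt B))) = FU (mfcomp D F K)"
      by (simp add: nf cat_eq_extend[OF cD b[symmetric]] b[symmetric] cat_eq_extend1[OF cD a] a)
  qed
qed

lemma mni_inv:
  assumes e: "is_monoidal_nat_iso C D F G \<eta>"
  shows "is_monoidal_nat_iso C D G F (\<lambda>A. inv_arr D (\<eta> A))"
proof -
  note e1 = mni_mnt[OF e]
  note mF = mnt_mf1[OF e1] and mG = mnt_mf2[OF e1]
  note n = mnt_nt'[OF e1]
  note mcC = mf_mc1[OF mF] and mcD = mf_mc2[OF mF]
  have cD: "category D" using mcD by simp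
  note s[simp] = mc_simps[OF mcC] mc_simps[OF mcD] functor_simps[OF mf_fun[OF mF]] functor_simps[OF mf_fun[OF mG]]
    mf_FT[OF mF] mf_FU[OF mF] mf_FT[OF mG] mf_FU[OF mG] nt_simps[OF n] mni_iso[OF e]
  note nf = cat_assoc mc_interchange[OF mcD]
  show ?thesis
  proof (rule mni_intro[OF mnt_intro[OF mG mF nt_intro[OF mf_fun[OF mG] mf_fun[OF mF]]]])
    fix A assume "A \<in> Ob C" then show "inv_arr D (\<eta> A) \<in> Arr D \<and> Dom D (inv_arr D (\<eta> A)) = FO G A \<and> Cod D (inv_arr D (\<eta> A)) = FO F A"
      by simp
    show "is_iso D (inv_arr D (\<eta> A))" using \<open>A \<in> Ob C\<close> by simp
  next
    fix f assume f: "f \<in> Arr C"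
    have a: "Cmp D (\<eta> (Cod C f)) (FM F f) = Cmp D (FM G f) (\<eta> (Dom C f))" using nt_nat[OF n f] .
    have b: "FM G f = Cmp D (Cmp D (\<eta> (Cod C f)) (FM F f)) (inv_arr D (\<eta> (Dom C f)))"
      using iso_solve[OF cD _ _ _ a[symmetric]] f by simp
    show "Cmp D (inv_arr D (\<eta> (Cod C f))) (FM G f) = Cmp D (FM F f) (inv_arr D (\<eta> (Dom C f)))"
      using f by (subst b) (simp add: cat_assoc)
  next
    fix A B assume A: "A \<in> Ob C" and B: "B \<in> Ob C"
    have a: "Cmp D (FT G A B) (\<eta> (Tns C A B)) = Cmp D (TnsA D (\<eta> A) (\<eta> B)) (FT F A B)" using mnt_FT[OF e1 A B] .
    have b: "FT G A B = Cmp D (Cmp D (TnsA D (\<eta> A) (\<eta> B)) (FT F A B)) (inv_arr D (\<eta> (Tns C A B)))"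
      using iso_solve[OF cD _ _ _ a] A B by simp
    show "Cmp D (FT F A B) (inv_arr D (\<eta> (Tns C A B))) = Cmp D (TnsA D (inv_arr D (\<eta> A)) (inv_arr D (\<eta> B))) (FT G A B)"
      using A B by (subst b) (simp add: cat_assoc mc_TnsA_inv[OF mcD, symmetric])
  next
    have a: "Cmp D (FU G) (\<eta> (Unt C)) = FU F" using mnt_FU[OF e1] .
    show "Cmp D (FU F) (inv_arr D (\<eta> (Unt C))) = FU G"
      using iso_solve[OF cD _ _ _ a] by simp
  qed
qed

lemma mni_id:
  assumes mF: "is_monoidal_functor C D F"
  shows "is_monoidal_nat_iso C D F F (\<lambda>A. Idt D (FO F A))"
proof -
  note mcC = mf_mc1[OF mF] and mcD = mf_mc2[OF mF]
  note s[simp] = mc_simps[OF mcC] mc_simps[OF mcD] functor_simps[OF mf_fun[OF mF]] mf_FT[OF mF] mf_FU[OF mF]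
  show ?thesis
  proof (rule mni_intro[OF mnt_intro[OF mF mF nt_intro[OF mf_fun[OF mF] mf_fun[OF mF]]]])
    fix A assume "A \<in> Ob C" then show "Idt D (FO F A) \<in> Arr D \<and> Dom D (Idt D (FO F A)) = FO F A \<and> Cod D (Idt D (FO F A)) = FO F A"
      by simp
    show "is_iso D (Idt D (FO F A))" using \<open>A \<in> Ob C\<close> by simp
  next
    fix f assume f: "f \<in> Arr C"
    then show "Cmp D (Idt D (FO F (Cod C f))) (FM F f) = Cmp D (FM F f) (Idt D (FO F (Dom C f)))" by simp
  next
    fix A B assume A: "A \<in> Ob C" and B: "B \<in> Ob C"
    then show "Cmp D (FT F A B) (Idt D (FO F (Tns C A B))) = Cmp D (TnsA D (Idt D (FO F A)) (Idt D (FO F B))) (FT F A B)"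
      by simp
  next
    show "Cmp D (FU F) (Idt D (FO F (Unt C))) = FU F" by simp
  qed
qed

lemma mf_eqD: "mf_eq C F G \<Longrightarrow> A \<in> Ob C \<Longrightarrow> FO F A = FO G A"
  "mf_eq C F G \<Longrightarrow> f \<in> Arr C \<Longrightarrow> FM F f = FM G f"
  "mf_eq C F G \<Longrightarrow> A \<in> Ob C \<Longrightarrow> B \<in> Ob C \<Longrightarrow> FT F A B = FT G A B"
  "mf_eq C F G \<Longrightarrow> FU F = FU G"
  unfolding mf_eq_def by blast+

lemma mnt_cong:
  assumes e: "is_monoidal_nat_trans C D F G \<eta>" and q1: "mf_eq C F F'" and q2: "mf_eq C G G'"
    and mF': "is_monoidal_functor C D F'" and mG': "is_monoidal_functor C D G'"
  shows "is_monoidal_nat_trans C D F' G' \<eta>"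
proof -
  note mF = mnt_mf1[OF e] and mG = mnt_mf2[OF e]
  note n = mnt_nt'[OF e]
  note mcC = mf_mc1[OF mF]
  note s[simp] = mc_simps[OF mcC] nt_simps[OF n]
  show ?thesis
  proof (rule mnt_intro[OF mF' mG' nt_intro[OF mf_fun[OF mF'] mf_fun[OF mG']]])
    fix A assume "A \<in> Ob C" then show "\<eta> A \<in> Arr D \<and> Dom D (\<eta> A) = FO F' A \<and> Cod D (\<eta> A) = FO G' A"
      using mf_eqD[OF q1] mf_eqD[OF q2] by simp
  next
    fix f assume f: "f \<in> Arr C"
    then show "Cmp D (\<eta> (Cod C f)) (FM F' f) = Cmp D (FM G' f) (\<eta> (Dom C f))"
      using nt_nat[OF n f] mf_eqD[OF q1] mf_eqD[OF q2] by simp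
  next
    fix A B assume A: "A \<in> Ob C" and B: "B \<in> Ob C"
    then show "Cmp D (FT G' A B) (\<eta> (Tns C A B)) = Cmp D (TnsA D (\<eta> A) (\<eta> B)) (FT F' A B)"
      using mnt_FT[OF e A B] mf_eqD[OF q1] mf_eqD[OF q2] by simp
  next
    show "Cmp D (FU G') (\<eta> (Unt C)) = FU F'"
      using mnt_FU[OF e] mf_eqD[OF q1] mf_eqD[OF q2] by simp
  qed
qed

lemma mni_cong:
  assumes e: "is_monoidal_nat_iso C D F G \<eta>" and q1: "mf_eq C F F'" and q2: "mf_eq C G G'"
    and mF': "is_monoidal_functor C D F'" and mG': "is_monoidal_functor C D G'"
  shows "is_monoidal_nat_iso C D F' G' \<eta>"
  using mni_intro[OF mnt_cong[OF mni_mnt[OF e] q1 q2 mF' mG']] mni_iso[OF e] by blast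

lemma mf_eq_refl: "mf_eq C F F" unfolding mf_eq_def by simp
lemma mf_eq_sym: "mf_eq C F G \<Longrightarrow> mf_eq C G F" unfolding mf_eq_def by simp
lemma mf_eq_idl:
  assumes mF: "is_monoidal_functor C D F"
  shows "mf_eq C (mfcomp D (mfid D) F) F"
proof -
  note s[simp] = mc_simps[OF mf_mc1[OF mF]] mc_simps[OF mf_mc2[OF mF]] functor_simps[OF mf_fun[OF mF]] mf_FT[OF mF] mf_FU[OF mF]
  show ?thesis unfolding mf_eq_def by simp
qed

lemma mni_whiskerL:
  assumes mK: "is_monoidal_functor D E K" and e: "is_monoidal_nat_iso C D F G \<eta>"
  shows "is_monoidal_nat_iso C E (mfcomp E K F) (mfcomp E K G) (\<lambda>A. FM K (\<eta> A))"
  by (rule mni_intro[OF mnt_whiskerL[OF mK mni_mnt[OF e]]])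
     (rule functor_iso[OF mf_fun[OF mK] mni_iso[OF e]])

lemma mni_whiskerR:
  assumes mK: "is_monoidal_functor B C K" and e: "is_monoidal_nat_iso C D F G \<eta>"
  shows "is_monoidal_nat_iso B D (mfcomp D F K) (mfcomp D G K) (\<lambda>A. \<eta> (FO K A))"
  by (rule mni_intro[OF mnt_whiskerR[OF mK mni_mnt[OF e]]])
     (rule mni_iso[OF e functor_Ob[OF mf_fun[OF mK]]])

lemma mni_ext:
  assumes e: "is_monoidal_nat_iso C D F G \<eta>" and q: "\<And>A. A \<in> Ob C \<Longrightarrow> \<eta> A = \<eta>' A"
  shows "is_monoidal_nat_iso C D F G \<eta>'"
proof -
  note e1 = mni_mnt[OF e]
  note mF = mnt_mf1[OF e1] and mG = mnt_mf2[OF e1] and n = mnt_nt'[OF e1]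
  note mcC = mf_mc1[OF mF]
  note s[simp] = mc_simps[OF mcC]
  show ?thesis
  proof (rule mni_intro[OF mnt_intro[OF mF mG nt_intro[OF mf_fun[OF mF] mf_fun[OF mG]]]])
    fix A assume A: "A \<in> Ob C"
    show "\<eta>' A \<in> Arr D \<and> Dom D (\<eta>' A) = FO F A \<and> Cod D (\<eta>' A) = FO G A" using nt_simps[OF n A] q[OF A] by simp
    show "is_iso D (\<eta>' A)" using mni_iso[OF e A] q[OF A] by simp
  next
    fix f assume f: "f \<in> Arr C"
    then show "Cmp D (\<eta>' (Cod C f)) (FM F f) = Cmp D (FM G f) (\<eta>' (Dom C f))"
      using nt_nat[OF n f] q[of "Cod C f"] q[of "Dom C f"] by simp
  next
    fix A B assume "A \<in> Ob C" "B \<in> Ob C"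
    then show "Cmp D (FT G A B) (\<eta>' (Tns C A B)) = Cmp D (TnsA D (\<eta>' A) (\<eta>' B)) (FT F A B)"
      using mnt_FT[OF e1] q by simp
  next
    show "Cmp D (FU G) (\<eta>' (Unt C)) = FU F" using mnt_FU[OF e1] q[of "Unt C"] by simp
  qed
qed

section \<open>Factor sets and crossed products\<close>

locale factor_set_locale =
  fixes \<Gamma> :: "('g,'x) monoid_scheme" and C :: "('o,'m,'z) moncat_scheme"
    and \<theta> :: "'g \<Rightarrow> 'g \<Rightarrow> 'o \<Rightarrow> 'm" and F :: "'g \<Rightarrow> ('o,'m,'o,'m,'w) monfnctr_scheme"
  assumes FS: "factor_set \<Gamma> C \<theta> F"
begin

lemma group_Gamma: "group \<Gamma>" using FS unfolding factor_set_def by blast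
lemma monoid_Gamma: "monoid \<Gamma>" using group_Gamma by (rule group.is_monoid)
lemma monoidal_C: "monoidal_category C" using FS unfolding factor_set_def by blast
lemma category_C[simp]: "category C" using monoidal_C by (rule moncat_cat)

lemma mult_closed[simp]: "\<sigma> \<in> carrier \<Gamma> \<Longrightarrow> \<tau> \<in> carrier \<Gamma> \<Longrightarrow> \<sigma> \<otimes>\<^bsub>\<Gamma>\<^esub> \<tau> \<in> carrier \<Gamma>"
  using monoid_Gamma by (rule monoid.m_closed)
lemma one_closed[simp]: "\<one>\<^bsub>\<Gamma>\<^esub> \<in> carrier \<Gamma>"
  using monoid_Gamma by (rule monoid.one_closed)
lemma l_one[simp]: "\<sigma> \<in> carrier \<Gamma> \<Longrightarrow> \<one>\<^bsub>\<Gamma>\<^esub> \<otimes>\<^bsub>\<Gamma>\<^esub> \<sigma> = \<sigma>"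
  using monoid_Gamma by (rule monoid.l_one)
lemma r_one[simp]: "\<sigma> \<in> carrier \<Gamma> \<Longrightarrow> \<sigma> \<otimes>\<^bsub>\<Gamma>\<^esub> \<one>\<^bsub>\<Gamma>\<^esub> = \<sigma>"
  using monoid_Gamma by (rule monoid.r_one)
lemma m_assoc: "\<sigma> \<in> carrier \<Gamma> \<Longrightarrow> \<tau> \<in> carrier \<Gamma> \<Longrightarrow> \<rho> \<in> carrier \<Gamma> \<Longrightarrow>
   \<sigma> \<otimes>\<^bsub>\<Gamma>\<^esub> \<tau> \<otimes>\<^bsub>\<Gamma>\<^esub> \<rho> = \<sigma> \<otimes>\<^bsub>\<Gamma>\<^esub> (\<tau> \<otimes>\<^bsub>\<Gamma>\<^esub> \<rho>)"
  using monoid_Gamma by (rule monoid.m_assoc)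

lemma F_meq: "\<sigma> \<in> carrier \<Gamma> \<Longrightarrow> is_monoidal_equivalence C C (F \<sigma>)"
  using FS unfolding factor_set_def by blast
lemma F_mf: "\<sigma> \<in> carrier \<Gamma> \<Longrightarrow> is_monoidal_functor C C (F \<sigma>)"
  using F_meq by (rule meq_mf)
lemma F_fun[simp]: "\<sigma> \<in> carrier \<Gamma> \<Longrightarrow> is_functor C C (F \<sigma>)"
  using F_mf by (rule mf_functor)
lemmas F_simps[simp] = functor_simps[OF F_fun]
lemma F_equivalence: "\<sigma> \<in> carrier \<Gamma> \<Longrightarrow> is_equivalence C C (F \<sigma>)"
  using F_meq unfolding is_monoidal_equivalence_def by blast
lemmas F_structure_simps[simp] = mf_FT[OF F_mf] mf_FU[OF F_mf]

lemma FM_Cmp: "\<sigma> \<in> carrier \<Gamma> \<Longrightarrow> f \<in> Arr C \<Longrightarrow> g \<in> Arr C \<Longrightarrow> Cod C f = Dom C g \<Longrightarrow>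
   FM (F \<sigma>) (Cmp C g f) = Cmp C (FM (F \<sigma>) g) (FM (F \<sigma>) f)"
  by (rule functor_Cmp[OF F_fun])
lemma FM_inv: "\<sigma> \<in> carrier \<Gamma> \<Longrightarrow> is_iso C f \<Longrightarrow> inv_arr C (FM (F \<sigma>) f) = FM (F \<sigma>) (inv_arr C f)"
  by (rule functor_inv[OF F_fun])

lemma theta_mni: "\<sigma> \<in> carrier \<Gamma> \<Longrightarrow> \<tau> \<in> carrier \<Gamma> \<Longrightarrow>
   is_monoidal_nat_iso C C (mfcomp C (F \<sigma>) (F \<tau>)) (F (\<sigma> \<otimes>\<^bsub>\<Gamma>\<^esub> \<tau>)) (\<theta> \<sigma> \<tau>)"
  using FS unfolding factor_set_def by blast
lemma theta_ni: "\<sigma> \<in> carrier \<Gamma> \<Longrightarrow> \<tau> \<in> carrier \<Gamma> \<Longrightarrow>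
   is_nat_iso C C (mfcomp C (F \<sigma>) (F \<tau>)) (F (\<sigma> \<otimes>\<^bsub>\<Gamma>\<^esub> \<tau>)) (\<theta> \<sigma> \<tau>)"
  using theta_mni by (rule mni_ni)
lemma theta_nt: "\<sigma> \<in> carrier \<Gamma> \<Longrightarrow> \<tau> \<in> carrier \<Gamma> \<Longrightarrow>
   is_nat_trans C C (mfcomp C (F \<sigma>) (F \<tau>)) (F (\<sigma> \<otimes>\<^bsub>\<Gamma>\<^esub> \<tau>)) (\<theta> \<sigma> \<tau>)"
  using theta_ni by (rule ni_nt)

lemma theta_Arr[simp]: "\<sigma> \<in> carrier \<Gamma> \<Longrightarrow> \<tau> \<in> carrier \<Gamma> \<Longrightarrow> A \<in> Ob C \<Longrightarrow> \<theta> \<sigma> \<tau> A \<in> Arr C"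
  using theta_nt by (rule nt_Arr)
lemma theta_Dom[simp]: "\<sigma> \<in> carrier \<Gamma> \<Longrightarrow> \<tau> \<in> carrier \<Gamma> \<Longrightarrow> A \<in> Ob C \<Longrightarrow> Dom C (\<theta> \<sigma> \<tau> A) = FO (F \<sigma>) (FO (F \<tau>) A)"
  using nt_Dom[OF theta_nt] by simp
lemma theta_Cod[simp]: "\<sigma> \<in> carrier \<Gamma> \<Longrightarrow> \<tau> \<in> carrier \<Gamma> \<Longrightarrow> A \<in> Ob C \<Longrightarrow> Cod C (\<theta> \<sigma> \<tau> A) = FO (F (\<sigma> \<otimes>\<^bsub>\<Gamma>\<^esub> \<tau>)) A"
  using nt_Cod[OF theta_nt] by simp
lemma theta_iso[simp]: "\<sigma> \<in> carrier \<Gamma> \<Longrightarrow> \<tau> \<in> carrier \<Gamma> \<Longrightarrow> A \<in> Ob C \<Longrightarrow> is_iso C (\<theta> \<sigma> \<tau> A)"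
  using theta_ni by (rule ni_iso)
lemma theta_nat: "\<sigma> \<in> carrier \<Gamma> \<Longrightarrow> \<tau> \<in> carrier \<Gamma> \<Longrightarrow> f \<in> Arr C \<Longrightarrow>
   Cmp C (\<theta> \<sigma> \<tau> (Cod C f)) (FM (F \<sigma>) (FM (F \<tau>) f)) = Cmp C (FM (F (\<sigma> \<otimes>\<^bsub>\<Gamma>\<^esub> \<tau>)) f) (\<theta> \<sigma> \<tau> (Dom C f))"
  using nt_nat[OF theta_nt] by simp

lemma F1_eq: "mf_eq C (F \<one>\<^bsub>\<Gamma>\<^esub>) (mfid C)"
  using FS unfolding factor_set_def by blast
lemma F1_O[simp]: "A \<in> Ob C \<Longrightarrow> FO (F \<one>\<^bsub>\<Gamma>\<^esub>) A = A"
  using F1_eq unfolding mf_eq_def by simp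
lemma F1_M[simp]: "f \<in> Arr C \<Longrightarrow> FM (F \<one>\<^bsub>\<Gamma>\<^esub>) f = f"
  using F1_eq unfolding mf_eq_def by simp
lemma F1_T[simp]: "A \<in> Ob C \<Longrightarrow> B \<in> Ob C \<Longrightarrow> FT (F \<one>\<^bsub>\<Gamma>\<^esub>) A B = Idt C (Tns C A B)"
  using mf_eqD(3)[OF F1_eq] by simp
lemma F1_U[simp]: "FU (F \<one>\<^bsub>\<Gamma>\<^esub>) = Idt C (Unt C)"
  using mf_eqD(4)[OF F1_eq] by simp

lemma theta_1l[simp]: "\<sigma> \<in> carrier \<Gamma> \<Longrightarrow> A \<in> Ob C \<Longrightarrow> \<theta> \<one>\<^bsub>\<Gamma>\<^esub> \<sigma> A = Idt C (FO (F \<sigma>) A)"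
  using FS unfolding factor_set_def by blast
lemma theta_1r[simp]: "\<sigma> \<in> carrier \<Gamma> \<Longrightarrow> A \<in> Ob C \<Longrightarrow> \<theta> \<sigma> \<one>\<^bsub>\<Gamma>\<^esub> A = Idt C (FO (F \<sigma>) A)"
  using FS unfolding factor_set_def by blast
lemma cocycle: "\<sigma> \<in> carrier \<Gamma> \<Longrightarrow> \<tau> \<in> carrier \<Gamma> \<Longrightarrow> \<gamma> \<in> carrier \<Gamma> \<Longrightarrow> A \<in> Ob C \<Longrightarrow>
        Cmp C (\<theta> (\<sigma> \<otimes>\<^bsub>\<Gamma>\<^esub> \<tau>) \<gamma> A) (\<theta> \<sigma> \<tau> (FO (F \<gamma>) A)) =
        Cmp C (\<theta> \<sigma> (\<tau> \<otimes>\<^bsub>\<Gamma>\<^esub> \<gamma>) A) (FM (F \<sigma>) (\<theta> \<tau> \<gamma> A))"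
  using FS unfolding factor_set_def by blast

abbreviation "XP \<equiv> crossed_product \<Gamma> C \<theta> F"

lemma xp_Ob[simp]: "Ob XP = Ob C" by (simp add: crossed_product_def)
lemma xp_Arr: "(A, B, u, \<sigma>) \<in> Arr XP \<longleftrightarrow> A \<in> Ob C \<and> B \<in> Ob C \<and> \<sigma> \<in> carrier \<Gamma> \<and>
    u \<in> Arr C \<and> Dom C u = FO (F \<sigma>) A \<and> Cod C u = B"
  by (simp add: crossed_product_def hom_def)
lemma xp_Dom[simp]: "Dom XP (A, B, u, \<sigma>) = A" by (simp add: crossed_product_def)
lemma xp_Cod[simp]: "Cod XP (A, B, u, \<sigma>) = B" by (simp add: crossed_product_def)
lemma xp_Idt[simp]: "Idt XP A = (A, A, Idt C A, \<one>\<^bsub>\<Gamma>\<^esub>)" by (simp add: crossed_product_def)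
lemma xp_Cmp[simp]: "Cmp XP (B', E, v, \<tau>) (A, B, u, \<sigma>) =
   (A, E, Cmp C v (Cmp C (FM (F \<tau>) u) (inv_arr C (\<theta> \<tau> \<sigma> A))), \<tau> \<otimes>\<^bsub>\<Gamma>\<^esub> \<sigma>)"
  by (simp add: crossed_product_def)

lemma xp_ArrE:
  assumes "f \<in> Arr XP"
  obtains A B u \<sigma> where "f = (A, B, u, \<sigma>)" "A \<in> Ob C" "B \<in> Ob C" "\<sigma> \<in> carrier \<Gamma>"
    "u \<in> Arr C" "Dom C u = FO (F \<sigma>) A" "Cod C u = B"
proof -
  obtain A B u \<sigma> where f: "f = (A, B, u, \<sigma>)" by (cases f) auto
  then show ?thesis using that assms by (simp add: xp_Arr)
qed

lemma theta_inv_cocycle: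
  assumes a: "\<rho> \<in> carrier \<Gamma>" "\<tau> \<in> carrier \<Gamma>" "\<sigma> \<in> carrier \<Gamma>" "A \<in> Ob C"
  shows "Cmp C (FM (F \<rho>) (inv_arr C (\<theta> \<tau> \<sigma> A))) (inv_arr C (\<theta> \<rho> (\<tau> \<otimes>\<^bsub>\<Gamma>\<^esub> \<sigma>) A)) =
         Cmp C (inv_arr C (\<theta> \<rho> \<tau> (FO (F \<sigma>) A))) (inv_arr C (\<theta> (\<rho> \<otimes>\<^bsub>\<Gamma>\<^esub> \<tau>) \<sigma> A))"
proof -
  have "Cmp C (FM (F \<rho>) (inv_arr C (\<theta> \<tau> \<sigma> A))) (inv_arr C (\<theta> \<rho> (\<tau> \<otimes>\<^bsub>\<Gamma>\<^esub> \<sigma>) A))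
      = inv_arr C (Cmp C (\<theta> \<rho> (\<tau> \<otimes>\<^bsub>\<Gamma>\<^esub> \<sigma>) A) (FM (F \<rho>) (\<theta> \<tau> \<sigma> A)))"
    using a by (simp add: inv_Cmp FM_inv[symmetric])
  also have "\<dots> = inv_arr C (Cmp C (\<theta> (\<rho> \<otimes>\<^bsub>\<Gamma>\<^esub> \<tau>) \<sigma> A) (\<theta> \<rho> \<tau> (FO (F \<sigma>) A)))"
    using cocycle[OF a] by simp
  also have "\<dots> = Cmp C (inv_arr C (\<theta> \<rho> \<tau> (FO (F \<sigma>) A))) (inv_arr C (\<theta> (\<rho> \<otimes>\<^bsub>\<Gamma>\<^esub> \<tau>) \<sigma> A))"
    using a by (simp add: inv_Cmp)
  finally show ?thesis .
qed

lemma theta_inv_nat: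
  assumes a: "\<rho> \<in> carrier \<Gamma>" "\<tau> \<in> carrier \<Gamma>" "u \<in> Arr C"
  shows "Cmp C (inv_arr C (\<theta> \<rho> \<tau> (Cod C u))) (FM (F (\<rho> \<otimes>\<^bsub>\<Gamma>\<^esub> \<tau>)) u) =
         Cmp C (FM (F \<rho>) (FM (F \<tau>) u)) (inv_arr C (\<theta> \<rho> \<tau> (Dom C u)))"
proof -
  have "FM (F (\<rho> \<otimes>\<^bsub>\<Gamma>\<^esub> \<tau>)) u =
      Cmp C (Cmp C (\<theta> \<rho> \<tau> (Cod C u)) (FM (F \<rho>) (FM (F \<tau>) u))) (inv_arr C (\<theta> \<rho> \<tau> (Dom C u)))"
    using iso_solve[OF category_C _ _ _ theta_nat[OF a, symmetric]] a by simp
  then show ?thesis using a by (simp add: cat_assoc)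
qed

lemma xp_Cmp_assoc:
  assumes f: "(A, B, u, \<sigma>) \<in> Arr XP" and g: "(B, E, v, \<tau>) \<in> Arr XP" and h: "(E, K, w, \<rho>) \<in> Arr XP"
  shows "Cmp XP (E, K, w, \<rho>) (Cmp XP (B, E, v, \<tau>) (A, B, u, \<sigma>)) =
         Cmp XP (Cmp XP (E, K, w, \<rho>) (B, E, v, \<tau>)) (A, B, u, \<sigma>)"
proof -
  have a: "A \<in> Ob C" "B \<in> Ob C" "E \<in> Ob C" "K \<in> Ob C" "\<sigma> \<in> carrier \<Gamma>" "\<tau> \<in> carrier \<Gamma>" "\<rho> \<in> carrier \<Gamma>"
    "u \<in> Arr C" "Dom C u = FO (F \<sigma>) A" "Cod C u = B"
    "v \<in> Arr C" "Dom C v = FO (F \<tau>) B" "Cod C v = E"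
    "w \<in> Arr C" "Dom C w = FO (F \<rho>) E" "Cod C w = K"
    using f g h by (auto simp: xp_Arr)
  have nt: "Cmp C (inv_arr C (\<theta> \<rho> \<tau> B)) (FM (F (\<rho> \<otimes>\<^bsub>\<Gamma>\<^esub> \<tau>)) u) =
            Cmp C (FM (F \<rho>) (FM (F \<tau>) u)) (inv_arr C (\<theta> \<rho> \<tau> (FO (F \<sigma>) A)))"
    using theta_inv_nat[of \<rho> \<tau> u] a by simp
  have "Cmp C (FM (F \<rho>) (Cmp C v (Cmp C (FM (F \<tau>) u) (inv_arr C (\<theta> \<tau> \<sigma> A))))) (inv_arr C (\<theta> \<rho> (\<tau> \<otimes>\<^bsub>\<Gamma>\<^esub> \<sigma>) A))
     = Cmp C (FM (F \<rho>) v) (Cmp C (FM (F \<rho>) (FM (F \<tau>) u)) (Cmp C (FM (F \<rho>) (inv_arr C (\<theta> \<tau> \<sigma> A))) (inv_arr C (\<theta> \<rho> (\<tau> \<otimes>\<^bsub>\<Gamma>\<^esub> \<sigma>) A))))"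
    using a by (simp add: FM_Cmp cat_assoc)
  also have "\<dots> = Cmp C (FM (F \<rho>) v) (Cmp C (Cmp C (FM (F \<rho>) (FM (F \<tau>) u)) (inv_arr C (\<theta> \<rho> \<tau> (FO (F \<sigma>) A)))) (inv_arr C (\<theta> (\<rho> \<otimes>\<^bsub>\<Gamma>\<^esub> \<tau>) \<sigma> A)))"
    using a by (simp add: theta_inv_cocycle cat_assoc)
  also have "\<dots> = Cmp C (Cmp C (FM (F \<rho>) v) (inv_arr C (\<theta> \<rho> \<tau> B))) (Cmp C (FM (F (\<rho> \<otimes>\<^bsub>\<Gamma>\<^esub> \<tau>)) u) (inv_arr C (\<theta> (\<rho> \<otimes>\<^bsub>\<Gamma>\<^esub> \<tau>) \<sigma> A)))"
    using a by (simp add: nt[symmetric] cat_assoc)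
  finally have key: "Cmp C (FM (F \<rho>) (Cmp C v (Cmp C (FM (F \<tau>) u) (inv_arr C (\<theta> \<tau> \<sigma> A))))) (inv_arr C (\<theta> \<rho> (\<tau> \<otimes>\<^bsub>\<Gamma>\<^esub> \<sigma>) A))
     = Cmp C (Cmp C (FM (F \<rho>) v) (inv_arr C (\<theta> \<rho> \<tau> B))) (Cmp C (FM (F (\<rho> \<otimes>\<^bsub>\<Gamma>\<^esub> \<tau>)) u) (inv_arr C (\<theta> (\<rho> \<otimes>\<^bsub>\<Gamma>\<^esub> \<tau>) \<sigma> A)))" .
  show ?thesis using a by (simp add: m_assoc key cat_assoc)
qed

lemma xp_cat: "category XP"
  unfolding category_def
proof (intro conjI ballI impI)
  fix f assume "f \<in> Arr XP"
  then obtain A B u \<sigma> where "f = (A, B, u, \<sigma>)" "A \<in> Ob C" "B \<in> Ob C" "\<sigma> \<in> carrier \<Gamma>"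
    "u \<in> Arr C" "Dom C u = FO (F \<sigma>) A" "Cod C u = B" by (rule xp_ArrE)
  then show "Dom XP f \<in> Ob XP" "Cod XP f \<in> Ob XP"
    "Cmp XP (Idt XP (Cod XP f)) f = f" "Cmp XP f (Idt XP (Dom XP f)) = f" by simp_all
next
  show "Idt XP A \<in> Defs.hom XP A A" if "A \<in> Ob XP" for A
    using that by (simp add: xp_Arr hom_def)
next
  fix f g assume "f \<in> Arr XP" "g \<in> Arr XP" "Cod XP f = Dom XP g"
  then show "Cmp XP g f \<in> Defs.hom XP (Dom XP f) (Cod XP g)"
    by (elim xp_ArrE) (simp add: xp_Arr hom_def)
next
  fix f g h assume "f \<in> Arr XP" "g \<in> Arr XP" "h \<in> Arr XP" "Cod XP f = Dom XP g \<and> Cod XP g = Dom XP h"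
  then show "Cmp XP h (Cmp XP g f) = Cmp XP (Cmp XP h g) f"
    by (elim xp_ArrE) (simp del: xp_Cmp add: xp_Cmp_assoc xp_Arr)
qed

lemma xp_iso:
  assumes u: "is_iso C u" "Dom C u = A" "Cod C u = B"
  shows "is_iso XP (A, B, u, \<one>\<^bsub>\<Gamma>\<^esub>)"
proof -
  have "A \<in> Ob C" "B \<in> Ob C" using u cat_Dom_Ob[OF category_C, of u] cat_Cod_Ob[OF category_C, of u] by auto
  then show ?thesis
    using u by (intro iso_intro[OF xp_cat, where g="(B, A, inv_arr C u, \<one>\<^bsub>\<Gamma>\<^esub>)"]) (simp_all add: xp_Arr)
qed
end

section \<open>Morphisms of factor sets\<close>

locale factor_set_morphism = S: factor_set_locale \<Gamma> C \<theta> F + T: factor_set_locale \<Gamma> C' \<theta>' F'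
  for \<Gamma> :: "('g,'x) monoid_scheme" and C :: "('o,'m,'z) moncat_scheme" and \<theta> and F :: "'g \<Rightarrow> ('o,'m,'o,'m,'w) monfnctr_scheme"
    and C' :: "('p,'n,'y) moncat_scheme" and \<theta>' and F' :: "'g \<Rightarrow> ('p,'n,'p,'n,'v) monfnctr_scheme" +
  fixes G :: "('o,'m,'p,'n,'u) fnctr_scheme" and \<phi> :: "'g \<Rightarrow> 'o \<Rightarrow> 'n"
  assumes Gf: "is_functor C C' G"
    and phi_Arr[simp]: "\<sigma> \<in> carrier \<Gamma> \<Longrightarrow> A \<in> Ob C \<Longrightarrow> \<phi> \<sigma> A \<in> Arr C'"
    and phi_Dom[simp]: "\<sigma> \<in> carrier \<Gamma> \<Longrightarrow> A \<in> Ob C \<Longrightarrow> Dom C' (\<phi> \<sigma> A) = FO (F' \<sigma>) (FO G A)"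
    and phi_Cod[simp]: "\<sigma> \<in> carrier \<Gamma> \<Longrightarrow> A \<in> Ob C \<Longrightarrow> Cod C' (\<phi> \<sigma> A) = FO G (FO (F \<sigma>) A)"
    and phi_nat: "\<sigma> \<in> carrier \<Gamma> \<Longrightarrow> f \<in> Arr C \<Longrightarrow>
       Cmp C' (\<phi> \<sigma> (Cod C f)) (FM (F' \<sigma>) (FM G f)) = Cmp C' (FM G (FM (F \<sigma>) f)) (\<phi> \<sigma> (Dom C f))"
    and phi_compat: "\<tau> \<in> carrier \<Gamma> \<Longrightarrow> \<sigma> \<in> carrier \<Gamma> \<Longrightarrow> A \<in> Ob C \<Longrightarrow>
       Cmp C' (\<phi> (\<tau> \<otimes>\<^bsub>\<Gamma>\<^esub> \<sigma>) A) (\<theta>' \<tau> \<sigma> (FO G A)) =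
       Cmp C' (FM G (\<theta> \<tau> \<sigma> A)) (Cmp C' (\<phi> \<tau> (FO (F \<sigma>) A)) (FM (F' \<tau>) (\<phi> \<sigma> A)))"
    and phi_one: "A \<in> Ob C \<Longrightarrow> \<phi> \<one>\<^bsub>\<Gamma>\<^esub> A = Idt C' (FO G A)"
begin

definition xp_functor :: "('o, 'o \<times> 'o \<times> 'm \<times> 'g, 'p, 'p \<times> 'p \<times> 'n \<times> 'g) fnctr" where
  "xp_functor = \<lparr>FO = FO G, FM = (\<lambda>(A, B, u, \<sigma>). (FO G A, FO G B, Cmp C' (FM G u) (\<phi> \<sigma> A), \<sigma>))\<rparr>"

lemma xp_functor_FO[simp]: "FO xp_functor = FO G" by (simp add: xp_functor_def)
lemma xp_functor_FM[simp]: "FM xp_functor (A, B, u, \<sigma>) = (FO G A, FO G B, Cmp C' (FM G u) (\<phi> \<sigma> A), \<sigma>)"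
  by (simp add: xp_functor_def)

lemmas G_simps[simp] = functor_simps[OF Gf]

lemma xp_functor_is_functor: "is_functor S.XP T.XP xp_functor"
  unfolding is_functor_def
proof (intro conjI ballI impI)
  show "category S.XP" by (rule S.xp_cat)
  show "category T.XP" by (rule T.xp_cat)
  show "FO xp_functor A \<in> Ob T.XP" if "A \<in> Ob S.XP" for A using that by simp
  show "FM xp_functor f \<in> Defs.hom T.XP (FO xp_functor (Dom S.XP f)) (FO xp_functor (Cod S.XP f))" if f: "f \<in> Arr S.XP" for f
  proof -
    obtain A B u \<sigma> where "f = (A, B, u, \<sigma>)" "A \<in> Ob C" "B \<in> Ob C" "\<sigma> \<in> carrier \<Gamma>"
      "u \<in> Arr C" "Dom C u = FO (F \<sigma>) A" "Cod C u = B" using S.xp_ArrE[OF f] by blast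
    then show ?thesis by (simp add: hom_def T.xp_Arr)
  qed
  show "FM xp_functor (Idt S.XP A) = Idt T.XP (FO xp_functor A)" if "A \<in> Ob S.XP" for A
    using that by (simp add: phi_one)
  show "FM xp_functor (Cmp S.XP g f) = Cmp T.XP (FM xp_functor g) (FM xp_functor f)"
    if f: "f \<in> Arr S.XP" and g: "g \<in> Arr S.XP" and fg: "Cod S.XP f = Dom S.XP g" for f g
  proof -
    obtain A B u \<sigma> where f': "f = (A, B, u, \<sigma>)" "A \<in> Ob C" "B \<in> Ob C" "\<sigma> \<in> carrier \<Gamma>"
      "u \<in> Arr C" "Dom C u = FO (F \<sigma>) A" "Cod C u = B" using S.xp_ArrE[OF f] by blast
    obtain B' E v \<tau> where g': "g = (B', E, v, \<tau>)" "B' \<in> Ob C" "E \<in> Ob C" "\<tau> \<in> carrier \<Gamma>"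
      "v \<in> Arr C" "Dom C v = FO (F \<tau>) B'" "Cod C v = E" using S.xp_ArrE[OF g] by blast
    have BB: "B' = B" using fg f' g' by simp
    note a = f'(2-7) g'(3-7)[unfolded BB]
    have cC': "category C'" by simp
    have comp: "Cmp C' (\<phi> (\<tau> \<otimes>\<^bsub>\<Gamma>\<^esub> \<sigma>) A) (\<theta>' \<tau> \<sigma> (FO G A)) =
       Cmp C' (FM G (\<theta> \<tau> \<sigma> A)) (Cmp C' (\<phi> \<tau> (FO (F \<sigma>) A)) (FM (F' \<tau>) (\<phi> \<sigma> A)))"
      using phi_compat a by simp
    have k1: "\<phi> (\<tau> \<otimes>\<^bsub>\<Gamma>\<^esub> \<sigma>) A = Cmp C' (Cmp C' (FM G (\<theta> \<tau> \<sigma> A)) (Cmp C' (\<phi> \<tau> (FO (F \<sigma>) A)) (FM (F' \<tau>) (\<phi> \<sigma> A)))) (inv_arr C' (\<theta>' \<tau> \<sigma> (FO G A)))"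
      using iso_solve[OF cC' _ _ _ comp] a by simp
    have k2: "Cmp C' (FM G (inv_arr C (\<theta> \<tau> \<sigma> A))) (\<phi> (\<tau> \<otimes>\<^bsub>\<Gamma>\<^esub> \<sigma>) A) =
       Cmp C' (\<phi> \<tau> (FO (F \<sigma>) A)) (Cmp C' (FM (F' \<tau>) (\<phi> \<sigma> A)) (inv_arr C' (\<theta>' \<tau> \<sigma> (FO G A))))"
      using a by (subst k1) (simp add: cat_assoc functor_inv[OF Gf, symmetric])
    have n: "Cmp C' (\<phi> \<tau> B) (FM (F' \<tau>) (FM G u)) = Cmp C' (FM G (FM (F \<tau>) u)) (\<phi> \<tau> (FO (F \<sigma>) A))"
      using phi_nat[of \<tau> u] a by simp
    show ?thesis
      unfolding f' g' BB using a
      by (simp add: functor_Cmp[OF Gf] T.FM_Cmp cat_assoc k2 cat_eq_extend[OF cC' n] n)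
  qed
qed

lemma xp_functor_fully_faithful:
  assumes ffG: "fully_faithful C C' G" and phi_iso: "\<And>\<sigma> A. \<sigma> \<in> carrier \<Gamma> \<Longrightarrow> A \<in> Ob C \<Longrightarrow> is_iso C' (\<phi> \<sigma> A)"
  shows "fully_faithful S.XP T.XP xp_functor"
  unfolding fully_faithful_def
proof (intro ballI allI impI)
  fix A B g assume A: "A \<in> Ob S.XP" and B: "B \<in> Ob S.XP"
    and g: "g \<in> Arr T.XP \<and> Dom T.XP g = FO xp_functor A \<and> Cod T.XP g = FO xp_functor B"
  obtain A' B' v \<sigma> where g': "g = (A', B', v, \<sigma>)" "A' \<in> Ob C'" "B' \<in> Ob C'" "\<sigma> \<in> carrier \<Gamma>"
    "v \<in> Arr C'" "Dom C' v = FO (F' \<sigma>) A'" "Cod C' v = B'" using T.xp_ArrE g by blast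
  have AB: "A' = FO G A" "B' = FO G B" using g g' by simp_all
  have A: "A \<in> Ob C" and B: "B \<in> Ob C" using A B by simp_all
  have cC': "category C'" by simp
  define w where "w = Cmp C' v (inv_arr C' (\<phi> \<sigma> A))"
  have w: "w \<in> Arr C'" "Dom C' w = FO G (FO (F \<sigma>) A)" "Cod C' w = FO G B"
    unfolding w_def using g' AB A phi_iso[of \<sigma> A] by simp_all
  obtain u where u: "u \<in> Arr C" "Dom C u = FO (F \<sigma>) A" "Cod C u = B" "FM G u = w"
    using fully_faithfulD[OF ffG _ B w] A g' by auto
  have wv: "Cmp C' w (\<phi> \<sigma> A) = v" unfolding w_def using g' AB A phi_iso[of \<sigma> A] by (simp add: cat_assoc)
  show "\<exists>!f. f \<in> Arr S.XP \<and> Dom S.XP f = A \<and> Cod S.XP f = B \<and> FM xp_functor f = g"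
  proof
    show "(A, B, u, \<sigma>) \<in> Arr S.XP \<and> Dom S.XP (A, B, u, \<sigma>) = A \<and> Cod S.XP (A, B, u, \<sigma>) = B \<and> FM xp_functor (A, B, u, \<sigma>) = g"
      using u A B g' AB wv by (simp add: S.xp_Arr)
    fix f assume f: "f \<in> Arr S.XP \<and> Dom S.XP f = A \<and> Cod S.XP f = B \<and> FM xp_functor f = g"
    obtain A1 B1 u1 \<sigma>1 where f': "f = (A1, B1, u1, \<sigma>1)" "A1 \<in> Ob C" "B1 \<in> Ob C" "\<sigma>1 \<in> carrier \<Gamma>"
      "u1 \<in> Arr C" "Dom C u1 = FO (F \<sigma>1) A1" "Cod C u1 = B1" using S.xp_ArrE f by blast
    have e: "A1 = A" "B1 = B" "\<sigma>1 = \<sigma>" "Cmp C' (FM G u1) (\<phi> \<sigma> A) = v" using f f' g' by auto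
    have "Cmp C' (FM G u1) (\<phi> \<sigma> A) = Cmp C' (FM G u) (\<phi> \<sigma> A)" by (simp only: e(4) wv u(4))
    moreover have "FM G u1 \<in> Arr C'" "FM G u \<in> Arr C'" "Dom C' (FM G u1) = Cod C' (\<phi> \<sigma> A)" "Dom C' (FM G u) = Cod C' (\<phi> \<sigma> A)"
      using f' e u(1-3) g' A by simp_all
    ultimately have "FM G u1 = FM G u"
      using iso_cancel_right[OF cC' phi_iso[of \<sigma> A], of "FM G u1" "FM G u"] g' A by blast
    then have "u1 = u" using fully_faithful_cancel[OF ffG Gf, of u1 u] f' e u by simp
    then show "f = (A, B, u, \<sigma>)" using f' e by simp
  qed
qed

lemma xp_functor_ess_surj:
  assumes esG: "ess_surj C C' G"
  shows "ess_surj S.XP T.XP xp_functor"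
  unfolding ess_surj_def
proof
  fix Y assume Y: "Y \<in> Ob T.XP"
  then have "Y \<in> Ob C'" by simp
  then obtain A i where A: "A \<in> Ob C" and i: "i \<in> Arr C'" "Dom C' i = FO G A" "Cod C' i = Y" "is_iso C' i"
    using esG unfolding ess_surj_def by blast
  show "\<exists>A\<in>Ob S.XP. \<exists>i. i \<in> Arr T.XP \<and> Dom T.XP i = FO xp_functor A \<and> Cod T.XP i = Y \<and> is_iso T.XP i"
    using A i Y T.xp_iso[of i "FO G A" Y]
    by (intro bexI[where x=A] exI[where x="(FO G A, Y, i, \<one>\<^bsub>\<Gamma>\<^esub>)"]) (simp_all add: T.xp_Arr)
qed

lemma xp_functor_graded_equivalence:
  assumes ffG: "fully_faithful C C' G" and esG: "ess_surj C C' G"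
    and phi_iso: "\<And>\<sigma> A. \<sigma> \<in> carrier \<Gamma> \<Longrightarrow> A \<in> Ob C \<Longrightarrow> is_iso C' (\<phi> \<sigma> A)"
  shows "graded_equivalence S.XP xp_grade T.XP xp_grade xp_functor"
  unfolding graded_equivalence_def
proof
  show "is_equivalence S.XP T.XP xp_functor"
    using ff_ess_surj_equivalence[OF xp_functor_is_functor xp_functor_fully_faithful[OF ffG phi_iso] xp_functor_ess_surj[OF esG]] .
  show "\<forall>f\<in>Arr S.XP. xp_grade (FM xp_functor f) = xp_grade f"
  proof
    fix f assume "f \<in> Arr S.XP"
    then obtain A B u \<sigma> where "f = (A, B, u, \<sigma>)" by (rule S.xp_ArrE)
    then show "xp_grade (FM xp_functor f) = xp_grade f" by (simp add: xp_grade_def)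
  qed
qed

end

section \<open>Transport along a monoidal equivalence\<close>

locale transport = factor_set_locale \<Gamma> C \<theta> F
  for \<Gamma> :: "'g monoid" and C :: "('o,'m) moncat" and \<theta> :: "'g \<Rightarrow> 'g \<Rightarrow> 'o \<Rightarrow> 'm"
    and F :: "'g \<Rightarrow> ('o,'m,'o,'m) monfnctr" +
  fixes C' :: "('o2,'m2) moncat" and G :: "('o,'m,'o2,'m2) monfnctr" and H :: "('o2,'m2,'o,'m) monfnctr"
    and \<alpha> :: "'o2 \<Rightarrow> 'm2" and \<beta> :: "'o \<Rightarrow> 'm"
  assumes G: "is_monoidal_equivalence C C' G" and H: "is_monoidal_equivalence C' C H"
    and alpha_mni: "is_monoidal_nat_iso C' C' (mfcomp C' G H) (mfid C') \<alpha>"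
    and beta_mni: "is_monoidal_nat_iso C C (mfcomp C H G) (mfid C) \<beta>"
begin

lemma mG: "is_monoidal_functor C C' G" and mH: "is_monoidal_functor C' C H"
  and eqG: "is_equivalence C C' G" and eqH: "is_equivalence C' C H"
  using G H unfolding is_monoidal_equivalence_def by blast+

lemma monoidal_C': "monoidal_category C'" using mf_mc2[OF mG] .
lemma category_C'[simp]: "category C'" using monoidal_C' by simp
lemma Gf: "is_functor C C' G" using mf_fun[OF mG] .
lemma Hf: "is_functor C' C H" using mf_fun[OF mH] .
lemmas transport_simps[simp] = mc_simps[OF monoidal_C'] mc_simps[OF monoidal_C] functor_simps[OF Gf] functor_simps[OF Hf]
lemma alpha_nt: "is_nat_trans C' C' (mfcomp C' G H) (mfid C') \<alpha>" using mnt_nt'[OF mni_mnt[OF alpha_mni]] .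
lemma beta_nt: "is_nat_trans C C (mfcomp C H G) (mfid C) \<beta>" using mnt_nt'[OF mni_mnt[OF beta_mni]] .
lemmas unit_counit_simps[simp] = nt_simps[OF alpha_nt] nt_simps[OF beta_nt] mni_iso[OF alpha_mni] mni_iso[OF beta_mni]

lemma alpha_nat: "f \<in> Arr C' \<Longrightarrow> Cmp C' (\<alpha> (Cod C' f)) (FM G (FM H f)) = Cmp C' f (\<alpha> (Dom C' f))"
  using nt_nat[OF alpha_nt] by simp
lemma beta_nat: "f \<in> Arr C \<Longrightarrow> Cmp C (\<beta> (Cod C f)) (FM H (FM G f)) = Cmp C f (\<beta> (Dom C f))"
  using nt_nat[OF beta_nt] by simp

lemma GH_alpha: "X \<in> Ob C' \<Longrightarrow> FM G (FM H (\<alpha> X)) = \<alpha> (FO G (FO H X))"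
proof -
  assume X: "X \<in> Ob C'"
  have "Cmp C' (\<alpha> X) (FM G (FM H (\<alpha> X))) = Cmp C' (\<alpha> X) (\<alpha> (FO G (FO H X)))"
    using alpha_nat[of "\<alpha> X"] X by simp
  then show ?thesis using iso_cancel_left[OF category_C', of "\<alpha> X" "FM G (FM H (\<alpha> X))" "\<alpha> (FO G (FO H X))"] X by simp
qed

lemma HG_beta: "A \<in> Ob C \<Longrightarrow> FM H (FM G (\<beta> A)) = \<beta> (FO H (FO G A))"
proof -
  assume A: "A \<in> Ob C"
  have "Cmp C (\<beta> A) (FM H (FM G (\<beta> A))) = Cmp C (\<beta> A) (\<beta> (FO H (FO G A)))"
    using beta_nat[of "\<beta> A"] A by simp
  then show ?thesis using iso_cancel_left[OF category_C, of "\<beta> A" "FM H (FM G (\<beta> A))" "\<beta> (FO H (FO G A))"] A by simp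
qed

text \<open>The counit \<open>\<alpha>\<close> need not satisfy the triangle identities with \<open>\<beta>\<close>; this modification does
  (\<open>counit_G\<close>, \<open>H_counit\<close>).\<close>
definition counit where "counit X = Cmp C' (\<alpha> X) (Cmp C' (FM G (\<beta> (FO H X))) (inv_arr C' (\<alpha> (FO G (FO H X)))))"

lemma mGH: "is_monoidal_functor C' C' (mfcomp C' G H)" using monoidal_functor_mfcomp[OF mH mG] .
lemma mHG: "is_monoidal_functor C C (mfcomp C H G)" using monoidal_functor_mfcomp[OF mG mH] .

lemma counit_mni: "is_monoidal_nat_iso C' C' (mfcomp C' G H) (mfid C') counit"
proof -
  let ?GH = "mfcomp C' G H"
  let ?M = "mfcomp C' G (mfcomp C (mfcomp C H G) H)"
  note p1 = mni_whiskerR[OF mGH mni_inv[OF alpha_mni]]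
  note p2 = mni_whiskerL[OF mG mni_whiskerR[OF mH beta_mni]]
  have mM: "is_monoidal_functor C' C' ?M" using monoidal_functor_mfcomp[OF monoidal_functor_mfcomp[OF mH mHG] mG] .
  have q1: "mf_eq C' (mfcomp C' (mfid C') ?GH) ?GH" using mf_eq_idl[OF mGH] .
  have q2: "mf_eq C' (mfcomp C' ?GH ?GH) ?M"
    unfolding mf_eq_def using mf_FT[OF mG] mf_FU[OF mG] mf_FT[OF mH] mf_FU[OF mH]
    by (simp add: functor_Cmp[OF Gf] functor_Cmp[OF Hf] cat_assoc)
  have q3: "mf_eq C' (mfcomp C' G (mfcomp C (mfid C) H)) ?GH"
    unfolding mf_eq_def using mf_FT[OF mG] mf_FU[OF mG] mf_FT[OF mH] mf_FU[OF mH]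
    by (simp add: functor_Cmp[OF Gf] functor_Cmp[OF Hf] cat_assoc)
  have p1': "is_monoidal_nat_iso C' C' ?GH ?M (\<lambda>X. inv_arr C' (\<alpha> (FO ?GH X)))"
    using mni_cong[OF p1 q1 q2 mGH mM] .
  have p2': "is_monoidal_nat_iso C' C' ?M ?GH (\<lambda>X. FM G (\<beta> (FO H X)))"
    using mni_cong[OF p2 mf_eq_refl q3 mM mGH] .
  show ?thesis
    using mni_ext[OF mni_vcomp[OF mni_vcomp[OF p1' p2'] alpha_mni]] unfolding counit_def by simp
qed

lemma counit_nt: "is_nat_trans C' C' (mfcomp C' G H) (mfid C') counit" using mnt_nt'[OF mni_mnt[OF counit_mni]] .
lemmas counit_simps[simp] = nt_simps[OF counit_nt] mni_iso[OF counit_mni]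
lemma counit_nat: "f \<in> Arr C' \<Longrightarrow> Cmp C' (counit (Cod C' f)) (FM G (FM H f)) = Cmp C' f (counit (Dom C' f))"
  using nt_nat[OF counit_nt] by simp

lemma counit_G: "A \<in> Ob C \<Longrightarrow> counit (FO G A) = FM G (\<beta> A)"
proof -
  assume A: "A \<in> Ob C"
  have n: "Cmp C' (\<alpha> (FO G A)) (FM G (FM H (FM G (\<beta> A)))) = Cmp C' (FM G (\<beta> A)) (\<alpha> (FO G (FO H (FO G A))))"
    using alpha_nat[of "FM G (\<beta> A)"] A by simp
  have "FM G (\<beta> (FO H (FO G A))) = FM G (FM H (FM G (\<beta> A)))" using HG_beta[OF A] by simp
  then show ?thesis unfolding counit_def using A by (simp add: cat_eq_extend[OF category_C' n] n)
qed

lemma H_counit: "X \<in> Ob C' \<Longrightarrow> FM H (counit X) = \<beta> (FO H X)"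
proof -
  assume X: "X \<in> Ob C'"
  have n: "Cmp C (FM H (\<alpha> X)) (\<beta> (FO H (FO G (FO H X)))) = Cmp C (\<beta> (FO H X)) (FM H (\<alpha> (FO G (FO H X))))"
    using beta_nat[of "FM H (\<alpha> X)"] X by (simp add: GH_alpha)
  have i: "Cmp C (FM H (\<alpha> (FO G (FO H X)))) (FM H (inv_arr C' (\<alpha> (FO G (FO H X))))) = Idt C (FO H (FO G (FO H X)))"
    using X by (simp add: functor_Cmp[OF Hf, symmetric])
  have "FM H (counit X) = Cmp C (FM H (\<alpha> X)) (Cmp C (\<beta> (FO H (FO G (FO H X)))) (FM H (inv_arr C' (\<alpha> (FO G (FO H X))))))"
    unfolding counit_def using X by (simp add: functor_Cmp[OF Hf] HG_beta)
  also have "\<dots> = Cmp C (\<beta> (FO H X)) (Cmp C (FM H (\<alpha> (FO G (FO H X)))) (FM H (inv_arr C' (\<alpha> (FO G (FO H X))))))"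
    using X by (simp add: cat_eq_extend[OF category_C n])
  also have "\<dots> = \<beta> (FO H X)" using X by (simp add: i)
  finally show ?thesis .
qed

lemmas GH_structure_simps[simp] = mf_FT[OF mG] mf_FU[OF mG] mf_FT[OF mH] mf_FU[OF mH]

text \<open>A factor set requires \<open>F'\<^sup>1 = id\<close> strictly, so the conjugate \<open>G F\<^sup>1 H\<close> is replaced by the
  identity at \<open>1\<close>; \<open>to_conjugate\<close> is the resulting comparison \<open>F'\<^sup>\<sigma> \<cong> G F\<^sup>\<sigma> H\<close>.\<close>
definition conjugate where "conjugate \<sigma> = mfcomp C' G (mfcomp C (F \<sigma>) H)"
definition F' where "F' \<sigma> = (if \<sigma> = \<one>\<^bsub>\<Gamma>\<^esub> then mfid C' else conjugate \<sigma>)"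
definition to_conjugate where "to_conjugate \<sigma> X = (if \<sigma> = \<one>\<^bsub>\<Gamma>\<^esub> then inv_arr C' (counit X) else Idt C' (FO (conjugate \<sigma>) X))"

lemma conjugate_FO[simp]: "FO (conjugate \<sigma>) X = FO G (FO (F \<sigma>) (FO H X))" by (simp add: conjugate_def)
lemma conjugate_FM[simp]: "FM (conjugate \<sigma>) f = FM G (FM (F \<sigma>) (FM H f))" by (simp add: conjugate_def)

lemma conjugate_mf: assumes "\<sigma> \<in> carrier \<Gamma>" shows "is_monoidal_functor C' C' (conjugate \<sigma>)"
  unfolding conjugate_def by (rule monoidal_functor_mfcomp[OF monoidal_functor_mfcomp[OF mH F_mf[OF assms]] mG])
lemma conjugate_equiv: assumes "\<sigma> \<in> carrier \<Gamma>" shows "is_equivalence C' C' (conjugate \<sigma>)"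
  unfolding conjugate_def by (rule equivalence_mfcomp[OF equivalence_mfcomp[OF eqH F_equivalence[OF assms]] eqG])

lemma F'_one[simp]: "F' \<one>\<^bsub>\<Gamma>\<^esub> = mfid C'" by (simp add: F'_def)
lemma F'_ne: "\<sigma> \<noteq> \<one>\<^bsub>\<Gamma>\<^esub> \<Longrightarrow> F' \<sigma> = conjugate \<sigma>" by (simp add: F'_def)
lemma F'_mf: "\<sigma> \<in> carrier \<Gamma> \<Longrightarrow> is_monoidal_functor C' C' (F' \<sigma>)"
  unfolding F'_def using monoidal_functor_mfid[OF monoidal_C'] conjugate_mf by simp
lemma F'_meq: "\<sigma> \<in> carrier \<Gamma> \<Longrightarrow> is_monoidal_equivalence C' C' (F' \<sigma>)"
  unfolding is_monoidal_equivalence_def F'_def using monoidal_functor_mfid[OF monoidal_C'] conjugate_mf conjugate_equiv equivalence_mfid[OF category_C'] by simp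
lemma F'_fun: "\<sigma> \<in> carrier \<Gamma> \<Longrightarrow> is_functor C' C' (F' \<sigma>)" using mf_fun[OF F'_mf] .

lemmas F'_simps[simp] = functor_simps[OF F'_fun]
lemma F'_Cmp: "\<sigma> \<in> carrier \<Gamma> \<Longrightarrow> f \<in> Arr C' \<Longrightarrow> g \<in> Arr C' \<Longrightarrow> Cod C' f = Dom C' g \<Longrightarrow>
   FM (F' \<sigma>) (Cmp C' g f) = Cmp C' (FM (F' \<sigma>) g) (FM (F' \<sigma>) f)" by (rule functor_Cmp[OF F'_fun])

lemma GH_eq_conjugate_one: "mf_eq C' (mfcomp C' G H) (conjugate \<one>\<^bsub>\<Gamma>\<^esub>)"
  unfolding mf_eq_def conjugate_def by simp

lemma to_conjugate_mni: "\<sigma> \<in> carrier \<Gamma> \<Longrightarrow> is_monoidal_nat_iso C' C' (F' \<sigma>) (conjugate \<sigma>) (to_conjugate \<sigma>)"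
proof (cases "\<sigma> = \<one>\<^bsub>\<Gamma>\<^esub>")
  case True
  have m: "is_monoidal_nat_iso C' C' (mfid C') (conjugate \<one>\<^bsub>\<Gamma>\<^esub>) (\<lambda>X. inv_arr C' (counit X))"
    using mni_cong[OF mni_inv[OF counit_mni] mf_eq_refl GH_eq_conjugate_one monoidal_functor_mfid[OF monoidal_C'] conjugate_mf[OF one_closed]] .
  have "is_monoidal_nat_iso C' C' (mfid C') (conjugate \<one>\<^bsub>\<Gamma>\<^esub>) (to_conjugate \<one>\<^bsub>\<Gamma>\<^esub>)"
    by (rule mni_ext[OF m]) (simp add: to_conjugate_def)
  then show ?thesis using True by simp
next
  case False
  assume s: "\<sigma> \<in> carrier \<Gamma>"
  have m: "is_monoidal_nat_iso C' C' (conjugate \<sigma>) (conjugate \<sigma>) (\<lambda>X. Idt C' (FO (conjugate \<sigma>) X))"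
    using mni_id[OF conjugate_mf[OF s]] .
  have "is_monoidal_nat_iso C' C' (conjugate \<sigma>) (conjugate \<sigma>) (to_conjugate \<sigma>)"
    by (rule mni_ext[OF m]) (simp add: to_conjugate_def False del: conjugate_FO)
  then show ?thesis using False by (simp add: F'_ne)
qed

lemma to_conjugate_nt: "\<sigma> \<in> carrier \<Gamma> \<Longrightarrow> is_nat_trans C' C' (F' \<sigma>) (conjugate \<sigma>) (to_conjugate \<sigma>)"
  using mnt_nt'[OF mni_mnt[OF to_conjugate_mni]] .
lemma to_conjugate_A[simp]: "\<sigma> \<in> carrier \<Gamma> \<Longrightarrow> X \<in> Ob C' \<Longrightarrow> to_conjugate \<sigma> X \<in> Arr C'" by (rule nt_Arr[OF to_conjugate_nt])
lemma to_conjugate_D[simp]: "\<sigma> \<in> carrier \<Gamma> \<Longrightarrow> X \<in> Ob C' \<Longrightarrow> Dom C' (to_conjugate \<sigma> X) = FO (F' \<sigma>) X" by (rule nt_Dom[OF to_conjugate_nt])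
lemma to_conjugate_C[simp]: "\<sigma> \<in> carrier \<Gamma> \<Longrightarrow> X \<in> Ob C' \<Longrightarrow> Cod C' (to_conjugate \<sigma> X) = FO G (FO (F \<sigma>) (FO H X))"
  using nt_Cod[OF to_conjugate_nt] by simp
lemma to_conjugate_iso[simp]: "\<sigma> \<in> carrier \<Gamma> \<Longrightarrow> X \<in> Ob C' \<Longrightarrow> is_iso C' (to_conjugate \<sigma> X)" by (rule mni_iso[OF to_conjugate_mni])
lemma to_conjugate_nat: "\<sigma> \<in> carrier \<Gamma> \<Longrightarrow> f \<in> Arr C' \<Longrightarrow>
   Cmp C' (to_conjugate \<sigma> (Cod C' f)) (FM (F' \<sigma>) f) = Cmp C' (FM G (FM (F \<sigma>) (FM H f))) (to_conjugate \<sigma> (Dom C' f))"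
  using nt_nat[OF to_conjugate_nt] by simp
lemma to_conjugate_one: "X \<in> Ob C' \<Longrightarrow> to_conjugate \<one>\<^bsub>\<Gamma>\<^esub> X = inv_arr C' (counit X)" by (simp add: to_conjugate_def)

text \<open>\<open>G F\<^sup>\<sigma> H G F\<^sup>\<tau> H \<Rightarrow> G F\<^sup>\<sigma> F\<^sup>\<tau> H \<Rightarrow> G F\<^sup>\<sigma>\<^sup>\<tau> H\<close>, via \<open>\<beta>\<close> and then \<open>\<theta>\<close>.\<close>
definition conjugate_theta where "conjugate_theta \<sigma> \<tau> X = Cmp C' (FM G (\<theta> \<sigma> \<tau> (FO H X))) (FM G (FM (F \<sigma>) (\<beta> (FO (F \<tau>) (FO H X)))))"

lemma conjugate_theta_mni: "\<sigma> \<in> carrier \<Gamma> \<Longrightarrow> \<tau> \<in> carrier \<Gamma> \<Longrightarrow>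
   is_monoidal_nat_iso C' C' (mfcomp C' (conjugate \<sigma>) (conjugate \<tau>)) (conjugate (\<sigma> \<otimes>\<^bsub>\<Gamma>\<^esub> \<tau>)) (conjugate_theta \<sigma> \<tau>)"
proof -
  assume s: "\<sigma> \<in> carrier \<Gamma>" and t: "\<tau> \<in> carrier \<Gamma>"
  note mFs = F_mf[OF s] and mFt = F_mf[OF t]
  have mK: "is_monoidal_functor C' C (mfcomp C (F \<tau>) H)" by (rule monoidal_functor_mfcomp[OF mH mFt])
  note q1 = mni_whiskerL[OF mG mni_whiskerL[OF mFs mni_whiskerR[OF mK beta_mni]]]
  note q2 = mni_whiskerL[OF mG mni_whiskerR[OF mH theta_mni[OF s t]]]
  let ?S1 = "mfcomp C' G (mfcomp C (F \<sigma>) (mfcomp C (mfcomp C H G) (mfcomp C (F \<tau>) H)))"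
  let ?T1 = "mfcomp C' G (mfcomp C (F \<sigma>) (mfcomp C (mfid C) (mfcomp C (F \<tau>) H)))"
  let ?S2 = "mfcomp C' G (mfcomp C (mfcomp C (F \<sigma>) (F \<tau>)) H)"
  have m1: "is_monoidal_functor C' C' (mfcomp C' (conjugate \<sigma>) (conjugate \<tau>))" by (rule monoidal_functor_mfcomp[OF conjugate_mf[OF t] conjugate_mf[OF s]])
  have m2: "is_monoidal_functor C' C' ?S2" by (rule monoidal_functor_mfcomp[OF monoidal_functor_mfcomp[OF mH monoidal_functor_mfcomp[OF mFt mFs]] mG])
  have e1: "mf_eq C' (mfcomp C' (conjugate \<sigma>) (conjugate \<tau>)) ?S1"
    unfolding mf_eq_def conjugate_def using s t
    by (simp add: functor_Cmp[OF Gf] functor_Cmp[OF Hf] FM_Cmp cat_assoc)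
  have e2: "mf_eq C' ?T1 ?S2"
    unfolding mf_eq_def using s t
    by (simp add: functor_Cmp[OF Gf] functor_Cmp[OF Hf] FM_Cmp cat_assoc)
  have q1': "is_monoidal_nat_iso C' C' (mfcomp C' (conjugate \<sigma>) (conjugate \<tau>)) ?S2 (\<lambda>X. FM G (FM (F \<sigma>) (\<beta> (FO (mfcomp C (F \<tau>) H) X))))"
    using mni_cong[OF q1 mf_eq_sym[OF e1] e2 m1 m2] .
  have q2': "is_monoidal_nat_iso C' C' ?S2 (conjugate (\<sigma> \<otimes>\<^bsub>\<Gamma>\<^esub> \<tau>)) (\<lambda>X. FM G (\<theta> \<sigma> \<tau> (FO H X)))"
    using q2 unfolding conjugate_def by simp
  show ?thesis using mni_ext[OF mni_vcomp[OF q1' q2']] unfolding conjugate_theta_def by simp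
qed

lemma conjugate_theta_nt: "\<sigma> \<in> carrier \<Gamma> \<Longrightarrow> \<tau> \<in> carrier \<Gamma> \<Longrightarrow> is_nat_trans C' C' (mfcomp C' (conjugate \<sigma>) (conjugate \<tau>)) (conjugate (\<sigma> \<otimes>\<^bsub>\<Gamma>\<^esub> \<tau>)) (conjugate_theta \<sigma> \<tau>)"
  using mnt_nt'[OF mni_mnt[OF conjugate_theta_mni]] .
lemma conjugate_theta_nat: "\<sigma> \<in> carrier \<Gamma> \<Longrightarrow> \<tau> \<in> carrier \<Gamma> \<Longrightarrow> f \<in> Arr C' \<Longrightarrow>
   Cmp C' (conjugate_theta \<sigma> \<tau> (Cod C' f)) (FM G (FM (F \<sigma>) (FM H (FM G (FM (F \<tau>) (FM H f)))))) =
   Cmp C' (FM G (FM (F (\<sigma> \<otimes>\<^bsub>\<Gamma>\<^esub> \<tau>)) (FM H f))) (conjugate_theta \<sigma> \<tau> (Dom C' f))"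
  using nt_nat[OF conjugate_theta_nt] by simp

lemma conjugate_theta_A[simp]: "\<sigma> \<in> carrier \<Gamma> \<Longrightarrow> \<tau> \<in> carrier \<Gamma> \<Longrightarrow> X \<in> Ob C' \<Longrightarrow> conjugate_theta \<sigma> \<tau> X \<in> Arr C'"
  by (rule nt_Arr[OF conjugate_theta_nt])
lemma conjugate_theta_D[simp]: "\<sigma> \<in> carrier \<Gamma> \<Longrightarrow> \<tau> \<in> carrier \<Gamma> \<Longrightarrow> X \<in> Ob C' \<Longrightarrow>
   Dom C' (conjugate_theta \<sigma> \<tau> X) = FO G (FO (F \<sigma>) (FO H (FO G (FO (F \<tau>) (FO H X)))))"
  using nt_Dom[OF conjugate_theta_nt] by simp
lemma conjugate_theta_C[simp]: "\<sigma> \<in> carrier \<Gamma> \<Longrightarrow> \<tau> \<in> carrier \<Gamma> \<Longrightarrow> X \<in> Ob C' \<Longrightarrow>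
   Cod C' (conjugate_theta \<sigma> \<tau> X) = FO G (FO (F (\<sigma> \<otimes>\<^bsub>\<Gamma>\<^esub> \<tau>)) (FO H X))"
  using nt_Cod[OF conjugate_theta_nt] by simp
lemma conjugate_theta_iso[simp]: "\<sigma> \<in> carrier \<Gamma> \<Longrightarrow> \<tau> \<in> carrier \<Gamma> \<Longrightarrow> X \<in> Ob C' \<Longrightarrow> is_iso C' (conjugate_theta \<sigma> \<tau> X)"
  by (rule mni_iso[OF conjugate_theta_mni])

definition theta' where "theta' \<sigma> \<tau> X = Cmp C' (inv_arr C' (to_conjugate (\<sigma> \<otimes>\<^bsub>\<Gamma>\<^esub> \<tau>) X))
   (Cmp C' (conjugate_theta \<sigma> \<tau> X) (Cmp C' (FM (conjugate \<sigma>) (to_conjugate \<tau> X)) (to_conjugate \<sigma> (FO (F' \<tau>) X))))"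

lemma theta'_mni: "\<sigma> \<in> carrier \<Gamma> \<Longrightarrow> \<tau> \<in> carrier \<Gamma> \<Longrightarrow>
   is_monoidal_nat_iso C' C' (mfcomp C' (F' \<sigma>) (F' \<tau>)) (F' (\<sigma> \<otimes>\<^bsub>\<Gamma>\<^esub> \<tau>)) (theta' \<sigma> \<tau>)"
proof -
  assume s: "\<sigma> \<in> carrier \<Gamma>" and t: "\<tau> \<in> carrier \<Gamma>"
  note p1 = mni_whiskerR[OF F'_mf[OF t] to_conjugate_mni[OF s]]
  note p2 = mni_whiskerL[OF conjugate_mf[OF s] to_conjugate_mni[OF t]]
  note p3 = conjugate_theta_mni[OF s t]
  note p4 = mni_inv[OF to_conjugate_mni[OF mult_closed[OF s t]]]
  show ?thesis using mni_ext[OF mni_vcomp[OF mni_vcomp[OF mni_vcomp[OF p1 p2] p3] p4]]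
    unfolding theta'_def by (simp del: conjugate_FM)
qed

lemma theta'_left_unit: "\<tau> \<in> carrier \<Gamma> \<Longrightarrow> X \<in> Ob C' \<Longrightarrow> theta' \<one>\<^bsub>\<Gamma>\<^esub> \<tau> X = Idt C' (FO (F' \<tau>) X)"
proof -
  assume t: "\<tau> \<in> carrier \<Gamma>" and X: "X \<in> Ob C'"
  have conjugate_theta_one: "conjugate_theta \<one>\<^bsub>\<Gamma>\<^esub> \<tau> X = counit (FO G (FO (F \<tau>) (FO H X)))"
    unfolding conjugate_theta_def using t X by (simp add: counit_G)
  have n: "Cmp C' (counit (FO G (FO (F \<tau>) (FO H X)))) (FM G (FM H (to_conjugate \<tau> X))) = Cmp C' (to_conjugate \<tau> X) (counit (FO (F' \<tau>) X))"
    using counit_nat[of "to_conjugate \<tau> X"] t X by simp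
  show ?thesis unfolding theta'_def using t X
    by (simp add: conjugate_theta_one to_conjugate_one cat_assoc cat_eq_extend[OF category_C' n] n)
qed

lemma theta'_right_unit: "\<tau> \<in> carrier \<Gamma> \<Longrightarrow> X \<in> Ob C' \<Longrightarrow> theta' \<tau> \<one>\<^bsub>\<Gamma>\<^esub> X = Idt C' (FO (F' \<tau>) X)"
proof -
  assume t: "\<tau> \<in> carrier \<Gamma>" and X: "X \<in> Ob C'"
  have conjugate_theta_one: "conjugate_theta \<tau> \<one>\<^bsub>\<Gamma>\<^esub> X = FM G (FM (F \<tau>) (\<beta> (FO H X)))"
    unfolding conjugate_theta_def using t X by simp
  have h: "FM H (to_conjugate \<one>\<^bsub>\<Gamma>\<^esub> X) = inv_arr C (\<beta> (FO H X))"
    using X by (simp add: to_conjugate_one functor_inv[OF Hf, symmetric] H_counit)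
  have i: "Cmp C' (FM G (FM (F \<tau>) (\<beta> (FO H X)))) (FM G (FM (F \<tau>) (inv_arr C (\<beta> (FO H X))))) = Idt C' (FO G (FO (F \<tau>) (FO H X)))"
    using t X by (simp add: functor_Cmp[OF Gf, symmetric] FM_Cmp[symmetric])
  show ?thesis unfolding theta'_def using t X
    by (simp add: conjugate_theta_one h cat_assoc cat_eq_extend1[OF category_C' i] i)
qed

lemma conjugate_theta_cocycle:
  assumes s: "\<sigma> \<in> carrier \<Gamma>" and t: "\<tau> \<in> carrier \<Gamma>" and g: "\<gamma> \<in> carrier \<Gamma>" and X: "X \<in> Ob C'"
  shows "Cmp C' (conjugate_theta (\<sigma> \<otimes>\<^bsub>\<Gamma>\<^esub> \<tau>) \<gamma> X) (conjugate_theta \<sigma> \<tau> (FO G (FO (F \<gamma>) (FO H X)))) =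
         Cmp C' (conjugate_theta \<sigma> (\<tau> \<otimes>\<^bsub>\<Gamma>\<^esub> \<gamma>) X) (FM G (FM (F \<sigma>) (FM H (conjugate_theta \<tau> \<gamma> X))))"
proof -
  define Y where "Y = FO H X"
  define Z where "Z = FO (F \<gamma>) Y"
  have Y: "Y \<in> Ob C" and Z: "Z \<in> Ob C" using X g unfolding Y_def Z_def by simp_all
  have n1: "Cmp C' (FM G (FM (F (\<sigma> \<otimes>\<^bsub>\<Gamma>\<^esub> \<tau>)) (\<beta> Z))) (FM G (\<theta> \<sigma> \<tau> (FO H (FO G Z)))) =
            Cmp C' (FM G (\<theta> \<sigma> \<tau> Z)) (FM G (FM (F \<sigma>) (FM (F \<tau>) (\<beta> Z))))"
    using arg_cong[OF theta_nat[OF s t, of "\<beta> Z"], of "FM G"] s t Z by (simp add: functor_Cmp[OF Gf])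
  have n2: "Cmp C' (FM G (\<theta> (\<sigma> \<otimes>\<^bsub>\<Gamma>\<^esub> \<tau>) \<gamma> Y)) (FM G (\<theta> \<sigma> \<tau> Z)) =
            Cmp C' (FM G (\<theta> \<sigma> (\<tau> \<otimes>\<^bsub>\<Gamma>\<^esub> \<gamma>) Y)) (FM G (FM (F \<sigma>) (\<theta> \<tau> \<gamma> Y)))"
    using arg_cong[OF cocycle[OF s t g Y], of "FM G"] s t g Y unfolding Z_def by (simp add: functor_Cmp[OF Gf])
  have n3: "Cmp C' (FM G (FM (F \<sigma>) (\<beta> (FO (F (\<tau> \<otimes>\<^bsub>\<Gamma>\<^esub> \<gamma>)) Y)))) (FM G (FM (F \<sigma>) (FM H (FM G (\<theta> \<tau> \<gamma> Y))))) =
            Cmp C' (FM G (FM (F \<sigma>) (\<theta> \<tau> \<gamma> Y))) (FM G (FM (F \<sigma>) (\<beta> (FO (F \<tau>) Z))))"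
    using arg_cong[OF beta_nat[of "\<theta> \<tau> \<gamma> Y"], of "\<lambda>x. FM G (FM (F \<sigma>) x)"] s t g Y
    unfolding Z_def by (simp add: functor_Cmp[OF Gf] FM_Cmp)
  have n4: "Cmp C' (FM G (FM (F \<sigma>) (\<beta> (FO (F \<tau>) Z)))) (FM G (FM (F \<sigma>) (FM H (FM G (FM (F \<tau>) (\<beta> Z)))))) =
            Cmp C' (FM G (FM (F \<sigma>) (FM (F \<tau>) (\<beta> Z)))) (FM G (FM (F \<sigma>) (\<beta> (FO (F \<tau>) (FO H (FO G Z))))))"
    using arg_cong[OF beta_nat[of "FM (F \<tau>) (\<beta> Z)"], of "\<lambda>x. FM G (FM (F \<sigma>) x)"] s t g Z
    by (simp add: functor_Cmp[OF Gf] FM_Cmp)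
  show ?thesis unfolding conjugate_theta_def Y_def[symmetric] Z_def[symmetric] using s t g X Y Z
    by (simp add: functor_Cmp[OF Gf] functor_Cmp[OF Hf] FM_Cmp cat_assoc cat_eq_extend[OF category_C' n1] n1 cat_eq_extend[OF category_C' n2] n2
        cat_eq_extend[OF category_C' n3] n3 cat_eq_extend[OF category_C' n4] n4 Y_def[symmetric] Z_def[symmetric])
qed

lemma to_conjugate_nat2: "\<sigma> \<in> carrier \<Gamma> \<Longrightarrow> f \<in> Arr C' \<Longrightarrow> Cod C' f = Y \<Longrightarrow> x \<in> Arr C' \<Longrightarrow> Cod C' x = FO (F' \<sigma>) (Dom C' f) \<Longrightarrow>
   Cmp C' (to_conjugate \<sigma> Y) (Cmp C' (FM (F' \<sigma>) f) x) = Cmp C' (FM G (FM (F \<sigma>) (FM H f))) (Cmp C' (to_conjugate \<sigma> (Dom C' f)) x)"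
proof -
  assume a: "\<sigma> \<in> carrier \<Gamma>" "f \<in> Arr C'" "Cod C' f = Y" "x \<in> Arr C'" "Cod C' x = FO (F' \<sigma>) (Dom C' f)"
  have Y: "Y \<in> Ob C'" using cat_Cod_Ob[OF category_C' a(2)] a(3) by simp
  have n: "Cmp C' (to_conjugate \<sigma> Y) (FM (F' \<sigma>) f) = Cmp C' (FM G (FM (F \<sigma>) (FM H f))) (to_conjugate \<sigma> (Dom C' f))"
    using to_conjugate_nat[OF a(1,2)] a(3) by simp
  show ?thesis using cat_eq_extend[OF category_C' n] a Y by simp
qed
lemma to_conjugate_nat1: "\<sigma> \<in> carrier \<Gamma> \<Longrightarrow> f \<in> Arr C' \<Longrightarrow> Cod C' f = Y \<Longrightarrow>
   Cmp C' (to_conjugate \<sigma> Y) (FM (F' \<sigma>) f) = Cmp C' (FM G (FM (F \<sigma>) (FM H f))) (to_conjugate \<sigma> (Dom C' f))"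
  using to_conjugate_nat[of \<sigma> f] by simp

lemma theta'_cocycle:
  assumes s: "\<sigma> \<in> carrier \<Gamma>" and t: "\<tau> \<in> carrier \<Gamma>" and g: "\<gamma> \<in> carrier \<Gamma>" and X: "X \<in> Ob C'"
  shows "Cmp C' (theta' (\<sigma> \<otimes>\<^bsub>\<Gamma>\<^esub> \<tau>) \<gamma> X) (theta' \<sigma> \<tau> (FO (F' \<gamma>) X)) =
         Cmp C' (theta' \<sigma> (\<tau> \<otimes>\<^bsub>\<Gamma>\<^esub> \<gamma>) X) (FM (F' \<sigma>) (theta' \<tau> \<gamma> X))"
proof -
  have n5: "Cmp C' (FM G (FM (F (\<sigma> \<otimes>\<^bsub>\<Gamma>\<^esub> \<tau>)) (FM H (to_conjugate \<gamma> X)))) (conjugate_theta \<sigma> \<tau> (FO (F' \<gamma>) X)) =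
            Cmp C' (conjugate_theta \<sigma> \<tau> (FO G (FO (F \<gamma>) (FO H X)))) (FM G (FM (F \<sigma>) (FM H (FM G (FM (F \<tau>) (FM H (to_conjugate \<gamma> X)))))))"
    using conjugate_theta_nat[OF s t, of "to_conjugate \<gamma> X"] g X by simp
  have n6: "Cmp C' (conjugate_theta (\<sigma> \<otimes>\<^bsub>\<Gamma>\<^esub> \<tau>) \<gamma> X) (conjugate_theta \<sigma> \<tau> (FO G (FO (F \<gamma>) (FO H X)))) =
         Cmp C' (conjugate_theta \<sigma> (\<tau> \<otimes>\<^bsub>\<Gamma>\<^esub> \<gamma>) X) (FM G (FM (F \<sigma>) (FM H (conjugate_theta \<tau> \<gamma> X))))"
    by (rule conjugate_theta_cocycle[OF s t g X])
  show ?thesis unfolding theta'_def using s t g X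
    by (simp add: functor_Cmp[OF Gf] functor_Cmp[OF Hf] FM_Cmp F'_Cmp cat_assoc
        cat_eq_extend[OF category_C' n5] n5 cat_eq_extend[OF category_C' n6] n6 to_conjugate_nat2 to_conjugate_nat1
        functor_inv[OF Gf, symmetric] functor_inv[OF Hf, symmetric] FM_inv[symmetric] m_assoc)
qed

lemma factor_set_transported: "factor_set \<Gamma> C' theta' F'"
  unfolding factor_set_def
proof (intro conjI ballI)
  show "group \<Gamma>" by (rule group_Gamma)
  show "monoidal_category C'" by (rule monoidal_C')
  show "is_monoidal_equivalence C' C' (F' \<sigma>)" if "\<sigma> \<in> carrier \<Gamma>" for \<sigma> using F'_meq[OF that] .
  show "is_monoidal_nat_iso C' C' (mfcomp C' (F' \<sigma>) (F' \<tau>)) (F' (\<sigma> \<otimes>\<^bsub>\<Gamma>\<^esub> \<tau>)) (theta' \<sigma> \<tau>)"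
    if "\<sigma> \<in> carrier \<Gamma>" "\<tau> \<in> carrier \<Gamma>" for \<sigma> \<tau> using theta'_mni[OF that] .
  show "mf_eq C' (F' \<one>\<^bsub>\<Gamma>\<^esub>) (mfid C')" by (simp add: mf_eq_refl)
  show "theta' \<one>\<^bsub>\<Gamma>\<^esub> \<sigma> A = Idt C' (FO (F' \<sigma>) A)" if "\<sigma> \<in> carrier \<Gamma>" "A \<in> Ob C'" for \<sigma> A
    using theta'_left_unit[OF that] .
  show "theta' \<sigma> \<one>\<^bsub>\<Gamma>\<^esub> A = Idt C' (FO (F' \<sigma>) A)" if "\<sigma> \<in> carrier \<Gamma>" "A \<in> Ob C'" for \<sigma> A
    using theta'_right_unit[OF that] .
  show "Cmp C' (theta' (\<sigma> \<otimes>\<^bsub>\<Gamma>\<^esub> \<tau>) \<gamma> A) (theta' \<sigma> \<tau> (FO (F' \<gamma>) A)) =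
        Cmp C' (theta' \<sigma> (\<tau> \<otimes>\<^bsub>\<Gamma>\<^esub> \<gamma>) A) (FM (F' \<sigma>) (theta' \<tau> \<gamma> A))"
    if "\<sigma> \<in> carrier \<Gamma>" "\<tau> \<in> carrier \<Gamma>" "\<gamma> \<in> carrier \<Gamma>" "A \<in> Ob C'" for \<sigma> \<tau> \<gamma> A
    using theta'_cocycle[OF that] .
qed

text \<open>\<open>F'\<^sup>\<sigma> G \<cong> G F\<^sup>\<sigma> H G \<cong> G F\<^sup>\<sigma>\<close>.\<close>
definition phi where "phi \<sigma> A = Cmp C' (FM G (FM (F \<sigma>) (\<beta> A))) (to_conjugate \<sigma> (FO G A))"

lemma phi_A[simp]: "\<sigma> \<in> carrier \<Gamma> \<Longrightarrow> A \<in> Ob C \<Longrightarrow> phi \<sigma> A \<in> Arr C'" unfolding phi_def by simp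
lemma phi_D[simp]: "\<sigma> \<in> carrier \<Gamma> \<Longrightarrow> A \<in> Ob C \<Longrightarrow> Dom C' (phi \<sigma> A) = FO (F' \<sigma>) (FO G A)" unfolding phi_def by simp
lemma phi_C[simp]: "\<sigma> \<in> carrier \<Gamma> \<Longrightarrow> A \<in> Ob C \<Longrightarrow> Cod C' (phi \<sigma> A) = FO G (FO (F \<sigma>) A)" unfolding phi_def by simp
lemma phi_iso[simp]: "\<sigma> \<in> carrier \<Gamma> \<Longrightarrow> A \<in> Ob C \<Longrightarrow> is_iso C' (phi \<sigma> A)" unfolding phi_def by simp

lemma phi_natural: "\<sigma> \<in> carrier \<Gamma> \<Longrightarrow> f \<in> Arr C \<Longrightarrow>
       Cmp C' (phi \<sigma> (Cod C f)) (FM (F' \<sigma>) (FM G f)) = Cmp C' (FM G (FM (F \<sigma>) f)) (phi \<sigma> (Dom C f))"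
proof -
  assume s: "\<sigma> \<in> carrier \<Gamma>" and f: "f \<in> Arr C"
  have n: "Cmp C' (FM G (FM (F \<sigma>) (\<beta> (Cod C f)))) (FM G (FM (F \<sigma>) (FM H (FM G f)))) =
           Cmp C' (FM G (FM (F \<sigma>) f)) (FM G (FM (F \<sigma>) (\<beta> (Dom C f))))"
    using arg_cong[OF beta_nat[OF f], of "\<lambda>x. FM G (FM (F \<sigma>) x)"] s f by (simp add: functor_Cmp[OF Gf] FM_Cmp)
  show ?thesis unfolding phi_def using s f
    by (simp add: cat_assoc to_conjugate_nat1 cat_eq_extend[OF category_C' n] n)
qed

lemma phi_theta_compat: "\<tau> \<in> carrier \<Gamma> \<Longrightarrow> \<sigma> \<in> carrier \<Gamma> \<Longrightarrow> A \<in> Ob C \<Longrightarrow>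
       Cmp C' (phi (\<tau> \<otimes>\<^bsub>\<Gamma>\<^esub> \<sigma>) A) (theta' \<tau> \<sigma> (FO G A)) =
       Cmp C' (FM G (\<theta> \<tau> \<sigma> A)) (Cmp C' (phi \<tau> (FO (F \<sigma>) A)) (FM (F' \<tau>) (phi \<sigma> A)))"
proof -
  assume t: "\<tau> \<in> carrier \<Gamma>" and s: "\<sigma> \<in> carrier \<Gamma>" and A: "A \<in> Ob C"
  have n7: "Cmp C' (FM G (FM (F \<tau>) (\<beta> (FO (F \<sigma>) A)))) (FM G (FM (F \<tau>) (FM H (FM G (FM (F \<sigma>) (\<beta> A)))))) =
            Cmp C' (FM G (FM (F \<tau>) (FM (F \<sigma>) (\<beta> A)))) (FM G (FM (F \<tau>) (\<beta> (FO (F \<sigma>) (FO H (FO G A))))))"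
    using arg_cong[OF beta_nat[of "FM (F \<sigma>) (\<beta> A)"], of "\<lambda>x. FM G (FM (F \<tau>) x)"] s t A
    by (simp add: functor_Cmp[OF Gf] FM_Cmp)
  have n8: "Cmp C' (FM G (\<theta> \<tau> \<sigma> A)) (FM G (FM (F \<tau>) (FM (F \<sigma>) (\<beta> A)))) =
            Cmp C' (FM G (FM (F (\<tau> \<otimes>\<^bsub>\<Gamma>\<^esub> \<sigma>)) (\<beta> A))) (FM G (\<theta> \<tau> \<sigma> (FO H (FO G A))))"
    using arg_cong[OF theta_nat[OF t s, of "\<beta> A"], of "FM G"] s t A by (simp add: functor_Cmp[OF Gf])
  show ?thesis unfolding phi_def theta'_def conjugate_theta_def using s t A
    by (simp add: functor_Cmp[OF Gf] functor_Cmp[OF Hf] FM_Cmp F'_Cmp cat_assoc to_conjugate_nat2 to_conjugate_nat1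
        cat_eq_extend[OF category_C' n7] n7 cat_eq_extend[OF category_C' n8] n8)
qed

lemma phi_unit: "A \<in> Ob C \<Longrightarrow> phi \<one>\<^bsub>\<Gamma>\<^esub> A = Idt C' (FO G A)"
  unfolding phi_def by (simp add: to_conjugate_one counit_G)

lemma phi_factor_set_morphism: "factor_set_morphism \<Gamma> C \<theta> F C' theta' F' G phi"
proof (unfold_locales)
  show "factor_set \<Gamma> C' theta' F'" by (rule factor_set_transported)
  show "is_functor C C' G" by (rule Gf)
qed (simp_all add: phi_natural phi_theta_compat phi_unit)

end

theorem proposition2p1:
  fixes \<Gamma> :: "'g monoid"
    and C :: "('o,'m) moncat" and C' :: "('o2,'m2) moncat"
    and G :: "('o,'m,'o2,'m2) monfnctr" and H :: "('o2,'m2,'o,'m) monfnctr"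
    and \<alpha> :: "'o2 \<Rightarrow> 'm2" and \<beta> :: "'o \<Rightarrow> 'm"
    and \<theta> :: "'g \<Rightarrow> 'g \<Rightarrow> 'o \<Rightarrow> 'm" and F :: "'g \<Rightarrow> ('o,'m,'o,'m) monfnctr"
  assumes "group \<Gamma>"
    and "monoidal_category C" and "monoidal_category C'"
    and "is_monoidal_equivalence C C' G" and "is_monoidal_equivalence C' C H"
    and "is_monoidal_nat_iso C' C' (mfcomp C' G H) (mfid C') \<alpha>"
    and "is_monoidal_nat_iso C C (mfcomp C H G) (mfid C) \<beta>"
    and "factor_set \<Gamma> C \<theta> F"
  shows "\<exists>(\<theta>' :: 'g \<Rightarrow> 'g \<Rightarrow> 'o2 \<Rightarrow> 'm2) (F' :: 'g \<Rightarrow> ('o2,'m2,'o2,'m2) monfnctr)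
           (\<Phi> :: ('o, 'o \<times> 'o \<times> 'm \<times> 'g, 'o2, 'o2 \<times> 'o2 \<times> 'm2 \<times> 'g) fnctr).
           factor_set \<Gamma> C' \<theta>' F' \<and>
           graded_equivalence (crossed_product \<Gamma> C \<theta> F) xp_grade
                              (crossed_product \<Gamma> C' \<theta>' F') xp_grade \<Phi>"
proof -
  interpret transport \<Gamma> C \<theta> F C' G H \<alpha> \<beta>
    using assms by unfold_locales
  interpret factor_set_morphism \<Gamma> C \<theta> F C' theta' F' G phi
    by (rule phi_factor_set_morphism)
  have "graded_equivalence (crossed_product \<Gamma> C \<theta> F) xp_grade
      (crossed_product \<Gamma> C' theta' F') xp_grade xp_functor"
    using xp_functor_graded_equivalence equivalence_fully_faithful[OF eqG] equivalence_ess_surj[OF eqG]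
    by simp
  with factor_set_transported show ?thesis by blast
qed

end
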